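(* Let $G$ be a compact Lie group with Lie algebra $\mathfrak{g}$ and bi-invariant metric $\langle\cdot,\cdot\rangle_0$, let $K\subseteq G$ be a closed subgroup with Lie algebra $\mathfrak{k}$, let $\mathfrak{p}=\mathfrak{k}^{\perp}$ with respect to $\langle\cdot,\cdot\rangle_0$, fix $t>0$, set $\phi(X)=X_{\mathfrak{p}}+\frac{t}{t+1}X_{\mathfrak{k}}$ and let $\langle\cdot,\cdot\rangle_1$ be the left-invariant metric on $G$ with $\langle X,Y\rangle_1=\langle\phi(X),Y\rangle_0$ for $X,Y\in\mathfrak{g}$. Let $U\subseteq K\times K$ be a closed subgroup with Lie algebra $\mathfrak{u}\subseteq\mathfrak{g}\oplus\mathfrak{g}$ such that the action of $U$ on $G$ given by $(u_1,u_2)\cdot g=u_1gu_2^{-1}$ is free. Let $\Delta G\times U$ act on $G\times G$ (with product metric $\langle\cdot,\cdot\rangle_1+\langle\cdot,\cdot\rangle_1$) by $(g,(u_1,u_2))\cdot(g_1,g_2)=(gg_1u_1^{-1},gg_2u_2^{-1})$. For $g_1\in G$, let $\mathcal{H}_{g_1}$ be the horizontal space (orthogonal complement of the tangent space of the orbit) at $(g_1,e)$, and let $(L_{g_1^{-1}})_*\mathcal{H}_{g_1}\subseteq\mathfrak{g}\oplus\mathfrak{g}$ be its left translate to $(e,e)$. Then $$(L_{g_1^{-1}})_*\mathcal{H}_{g_1}=\{(\phi^{-1}(-\mathrm{Ad}_{g_1^{-1}}X),\phi^{-1}(X)) : X\in\mathfrak{g},\ \langle X,\mathrm{Ad}_{g_1}U_1-U_2\rangle_0=0\text{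 for all }(U_1,U_2)\in\mathfrak{u}\}.$$
   Context: The metric $\langle\cdot,\cdot\rangle_1$ is the Cheeger deformation of $\langle\cdot,\cdot\rangle_0$ in the direction of $K$; it is left $G$-invariant and right $K$-invariant, so the stated action is isometric. Subscripts $\mathfrak{k},\mathfrak{p}$ denote the components in the orthogonal decomposition $\mathfrak{g}=\mathfrak{k}\oplus\mathfrak{p}$. *)

theory Defs
  imports "HOL-Analysis.Analysis"
begin

type_synonym 'n mat = "real^'n^'n"

primrec mpow :: "'n::finite mat \<Rightarrow> nat \<Rightarrow> 'n mat" where
  "mpow X 0 = mat 1"
| "mpow X (Suc k) = X ** mpow X k"

definition mexp :: "'n::finite mat \<Rightarrow> 'n mat" where
  "mexp X = (\<Sum>k. (1 / fact k) *\<^sub>R mpow X k)"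

definition closed_matrix_group :: "'n::finite mat set \<Rightarrow> bool" where
  "closed_matrix_group G \<longleftrightarrow> closed G \<and> mat 1 \<in> G \<and>
     (\<forall>a\<in>G. \<forall>b\<in>G. a ** b \<in> G) \<and>
     (\<forall>a\<in>G. invertible a \<and> matrix_inv a \<in> G)"

definition lie_alg :: "'n::finite mat set \<Rightarrow> 'n mat set" where
  "lie_alg G = {X. \<forall>s::real. mexp (s *\<^sub>R X) \<in> G}"

definition closed_pair_group :: "('n::finite mat \<times> 'n mat) set \<Rightarrow> bool" where
  "closed_pair_group U \<longleftrightarrow> closed U \<and> (mat 1, mat 1) \<in> U \<and>
     (\<forall>(a1,a2)\<in>U. \<forall>(b1,b2)\<in>U. (a1 ** b1, a2 ** b2) \<in> U) \<and>
     (\<forall>(a1,a2)\<in>U. invertible a1 \<and> invertible a2 \<and> (matrix_inv a1, matrix_inv a2) \<in> U)"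

definition lie_alg_pair :: "('n::finite mat \<times> 'n mat) set \<Rightarrow> ('n mat \<times> 'n mat) set" where
  "lie_alg_pair U = {(X1, X2). \<forall>s::real. (mexp (s *\<^sub>R X1), mexp (s *\<^sub>R X2)) \<in> U}"

definition Ad :: "'n::finite mat \<Rightarrow> 'n mat \<Rightarrow> 'n mat" where
  "Ad g X = g ** X ** matrix_inv g"

definition tangent_space :: "'a::real_normed_vector set \<Rightarrow> 'a \<Rightarrow> 'a set" where
  "tangent_space S p = {v. \<exists>\<gamma>::real \<Rightarrow> 'a. \<gamma> 0 = p \<and> (\<forall>s. \<gamma> s \<in> S) \<and>
                                  (\<gamma> has_vector_derivative v) (at 0)}"

definition perp_in :: "('n::finite mat \<Rightarrow> 'n mat \<Rightarrow> real) \<Rightarrow> 'n mat set \<Rightarrow> 'n mat set \<Rightarrow> 'n mat set" where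
  "perp_in B g k = {X \<in> g. \<forall>Y\<in>k. B X Y = 0}"

definition kcomp :: "('n::finite mat \<Rightarrow> 'n mat \<Rightarrow> real) \<Rightarrow> 'n mat set \<Rightarrow> 'n mat set \<Rightarrow> 'n mat \<Rightarrow> 'n mat" where
  "kcomp B g k X = (THE Y. Y \<in> k \<and> X - Y \<in> perp_in B g k)"

definition pcomp :: "('n::finite mat \<Rightarrow> 'n mat \<Rightarrow> real) \<Rightarrow> 'n mat set \<Rightarrow> 'n mat set \<Rightarrow> 'n mat \<Rightarrow> 'n mat" where
  "pcomp B g k X = X - kcomp B g k X"

definition cheeger_phi :: "('n::finite mat \<Rightarrow> 'n mat \<Rightarrow> real) \<Rightarrow> 'n mat set \<Rightarrow> 'n mat set \<Rightarrow> real \<Rightarrow> 'n mat \<Rightarrow> 'n mat" where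
  "cheeger_phi B g k t X = pcomp B g k X + (t / (t + 1)) *\<^sub>R kcomp B g k X"

definition metric1 :: "('n::finite mat \<Rightarrow> 'n mat \<Rightarrow> real) \<Rightarrow> 'n mat set \<Rightarrow> 'n mat set \<Rightarrow> real
    \<Rightarrow> 'n mat \<Rightarrow> 'n mat \<Rightarrow> 'n mat \<Rightarrow> real" where
  "metric1 B g k t a v w = B (cheeger_phi B g k t (matrix_inv a ** v)) (matrix_inv a ** w)"

definition metric1_prod :: "('n::finite mat \<Rightarrow> 'n mat \<Rightarrow> real) \<Rightarrow> 'n mat set \<Rightarrow> 'n mat set \<Rightarrow> real
    \<Rightarrow> 'n mat \<times> 'n mat \<Rightarrow> 'n mat \<times> 'n mat \<Rightarrow> 'n mat \<times> 'n mat \<Rightarrow> real" where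
  "metric1_prod B g k t p v w =
     metric1 B g k t (fst p) (fst v) (fst w) + metric1 B g k t (snd p) (snd v) (snd w)"

definition act :: "'n::finite mat \<Rightarrow> 'n mat \<times> 'n mat \<Rightarrow> 'n mat \<times> 'n mat \<Rightarrow> 'n mat \<times> 'n mat" where
  "act g u x = (g ** fst x ** matrix_inv (fst u), g ** snd x ** matrix_inv (snd u))"

definition orbit :: "'n::finite mat set \<Rightarrow> ('n mat \<times> 'n mat) set \<Rightarrow> 'n mat \<times> 'n mat \<Rightarrow> ('n mat \<times> 'n mat) set" where
  "orbit G U x = {act g u x | g u. g \<in> G \<and> u \<in> U}"

definition horizontal :: "('n::finite mat \<Rightarrow> 'n mat \<Rightarrow> real) \<Rightarrow> 'n mat set \<Rightarrow> 'n mat set \<Rightarrow> real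
    \<Rightarrow> ('n mat \<times> 'n mat) set \<Rightarrow> 'n mat \<times> 'n mat \<Rightarrow> ('n mat \<times> 'n mat) set" where
  "horizontal B G K t U x =
     {v \<in> tangent_space (G \<times> G) x. \<forall>w \<in> tangent_space (orbit G U x) x.
        metric1_prod B (lie_alg G) (lie_alg K) t x v w = 0}"

end

theory Submission
  imports Defs
begin

text \<open>
  Left translation by \<open>(g\<^sub>1, e)\<close> identifies the tangent space of \<open>G \<times> G\<close> at \<open>(g\<^sub>1, e)\<close>
  with \<open>\<g> \<oplus> \<g>\<close>, where the product metric becomes \<open>\<langle>\<phi> A, X\<rangle>\<^sub>0 + \<langle>\<phi> C, Y\<rangle>\<^sub>0\<close>.
  The orbit of \<open>(g\<^sub>1, e)\<close> has the velocities \<open>(X g\<^sub>1 + g\<^sub>1 V\<^sub>1, X + V\<^sub>2)\<close> with \<open>X \<in> \<g>\<close>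
  and \<open>(V\<^sub>1, V\<^sub>2) \<in> \<u>\<close>. By bi-invariance and definiteness, orthogonality to the
  \<open>X\<close>-directions means \<open>Ad\<^sub>g\<^sub>1 (\<phi> A) + \<phi> C = 0\<close>, and orthogonality to the
  \<open>\<u>\<close>-directions is then the stated condition on \<open>\<phi> C\<close>; \<open>\<phi>\<close> is invertible on \<open>\<g>\<close>
  since it only rescales the \<open>\<k>\<close>-component.

  The substantial step is that every velocity of a curve in the orbit has that form. Sample the
  curve at times \<open>s\<^sub>n \<rightarrow> 0\<close>, lift the samples to points \<open>h\<^sub>n\<close> of the compact group
  \<open>G \<times> U\<close> that are closest to the identity within their fibres, and blow up at the scale
  \<open>|h\<^sub>n - 1| + s\<^sub>n\<close>. A limit direction without \<open>s\<close>-component would be a nonzero tangent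
  vector of the stabilizer, contradicting minimality; otherwise the limit exhibits the velocity as
  the image of a Lie algebra element.
\<close>

section \<open>Square matrices as a Banach algebra\<close>

lemma matrix_add_rdistrib: "((A::'a::semiring_1^'n^'m) + B) ** C = A ** C + B ** C"
  by (vector matrix_matrix_mult_def sum.distrib[symmetric] field_simps)

lemma matrix_diff_ldistrib: "(A::'a::ring_1^'n^'m) ** (B - C) = A ** B - A ** C"
  by (vector matrix_matrix_mult_def sum_subtractf[symmetric] field_simps)

lemma matrix_diff_rdistrib: "((A::'a::ring_1^'n^'m) - B) ** C = A ** C - B ** C"
  by (vector matrix_matrix_mult_def sum_subtractf[symmetric] field_simps)

lemma matrix_neg_left: "(- (A::'a::ring_1^'n^'m)) ** C = - (A ** C)"
  by (vector matrix_matrix_mult_def sum_negf[symmetric])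

lemma matrix_neg_right: "(A::'a::ring_1^'n^'m) ** (- C) = - (A ** C)"
  by (vector matrix_matrix_mult_def sum_negf[symmetric])

lemma matrix_scaleR_left: "(c *\<^sub>R (A::real^'n^'m)) ** C = c *\<^sub>R (A ** C)"
  by (simp add: scalar_matrix_assoc)

lemma matrix_scaleR_right: "(A::real^'n^'m) ** (c *\<^sub>R C) = c *\<^sub>R (A ** C)"
  by (simp add: matrix_scalar_ac scalar_matrix_assoc)

lemma bounded_bilinear_matrix_mult: "bounded_bilinear (\<lambda>(A::real^'n^'m) (B::real^'k^'n). A ** B)"
  by (rule bilinear_conv_bounded_bilinear[THEN iffD1])
     (auto simp: bilinear_def linear_iff matrix_add_ldistrib matrix_add_rdistrib
        matrix_scaleR_left matrix_scaleR_right)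

lemma tendsto_matrix_mult:
  fixes f g :: "_ \<Rightarrow> real^'n^'n"
  assumes "(f \<longlongrightarrow> a) F" "(g \<longlongrightarrow> b) F"
  shows "((\<lambda>x. f x ** g x) \<longlongrightarrow> a ** b) F"
  using bounded_bilinear.tendsto[OF bounded_bilinear_matrix_mult assms] by simp

lemma matrix_mult_has_vector_derivative:
  fixes f g :: "real \<Rightarrow> real^'n^'n"
  assumes "(f has_vector_derivative f') (at x within s)" "(g has_vector_derivative g') (at x within s)"
  shows "((\<lambda>x. f x ** g x) has_vector_derivative (f x ** g' + f' ** g x)) (at x within s)"
  by (rule bounded_bilinear.has_vector_derivative[OF bounded_bilinear_matrix_mult assms])

lemma matrix_inv_unique:
  fixes A B :: "real^'n^'n"
  assumes "A ** B = mat 1" "B ** A = mat 1"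
  shows "matrix_inv A = B"
  unfolding matrix_inv_def
proof (rule some_equality)
  fix A' assume "A ** A' = mat 1 \<and> A' ** A = mat 1"
  then have "A' = A' ** (A ** B)" "A' ** A = mat 1" by (simp_all add: assms)
  then show "A' = B" by (simp add: matrix_mul_assoc)
qed (use assms in simp)

lemma matrix_inv_right: "invertible A \<Longrightarrow> A ** matrix_inv A = mat 1"
  and matrix_inv_left: "invertible A \<Longrightarrow> matrix_inv A ** A = mat 1"
  for A :: "real^'n^'n"
  unfolding invertible_def matrix_inv_def by (metis (mono_tags, lifting) someI_ex)+

lemma matrix_inv_matrix_inv: "invertible A \<Longrightarrow> matrix_inv (matrix_inv A) = A"
  for A :: "real^'n^'n"
  by (intro matrix_inv_unique matrix_inv_left matrix_inv_right)

lemma matrix_inv_mat_1 [simp]: "matrix_inv (mat 1 :: real^'n^'n) = mat 1"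
  by (rule matrix_inv_unique) simp_all

text \<open>On \<open>real^'n^'n\<close> the operation \<open>*\<close> is the componentwise product, so the matrix algebra
  needs a type of its own; the operator norm makes it a Banach algebra.\<close>

typedef (overloaded) ('n::finite) sqmat = "UNIV :: (real^'n^'n) set"
  morphisms Rep_sqmat Abs_sqmat ..

lemmas Rep_Abs_sqmat = Abs_sqmat_inverse[OF UNIV_I]

instantiation sqmat :: (finite) real_algebra_1
begin
definition zero_sqmat_def: "0 = Abs_sqmat 0"
definition one_sqmat_def: "1 = Abs_sqmat (mat 1)"
definition plus_sqmat_def: "a + b = Abs_sqmat (Rep_sqmat a + Rep_sqmat b)"
definition minus_sqmat_def: "a - b = Abs_sqmat (Rep_sqmat a - Rep_sqmat b)"
definition uminus_sqmat_def: "- a = Abs_sqmat (- Rep_sqmat a)"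
definition times_sqmat_def: "a * b = Abs_sqmat (Rep_sqmat a ** Rep_sqmat b)"
definition scaleR_sqmat_def: "scaleR r a = Abs_sqmat (r *\<^sub>R Rep_sqmat a)"
instance
proof
  fix a b c :: "'a sqmat" and r s :: real
  note defs = zero_sqmat_def one_sqmat_def plus_sqmat_def minus_sqmat_def uminus_sqmat_def
    times_sqmat_def scaleR_sqmat_def Rep_Abs_sqmat Rep_sqmat_inverse
  show "a + b + c = a + (b + c)" by (simp add: defs add.assoc)
  show "a + b = b + a" by (simp add: defs add.commute)
  show "0 + a = a" "- a + a = 0" "a - b = a + - b" "1 * a = a" "a * 1 = a" by (simp_all add: defs)
  show "a * b * c = a * (b * c)" by (simp add: defs matrix_mul_assoc)
  show "(a + b) * c = a * c + b * c" by (simp add: defs matrix_add_rdistrib)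
  show "a * (b + c) = a * b + a * c" by (simp add: defs matrix_add_ldistrib)
  show "r *\<^sub>R (a + b) = r *\<^sub>R a + r *\<^sub>R b" "(r + s) *\<^sub>R a = r *\<^sub>R a + s *\<^sub>R a"
    "r *\<^sub>R s *\<^sub>R a = (r * s) *\<^sub>R a" "1 *\<^sub>R a = a"
    by (simp_all add: defs scaleR_add_right scaleR_add_left)
  show "r *\<^sub>R a * b = r *\<^sub>R (a * b)" "a * r *\<^sub>R b = r *\<^sub>R (a * b)"
    by (simp_all add: defs matrix_scaleR_left matrix_scaleR_right)
  have "(mat 1 :: real^'a^'a) \<noteq> 0"
    by (metis matrix_vector_mul_lid matrix_vector_mult_0 vector_choose_size zero_neq_one)
  then show "(0::'a sqmat) \<noteq> 1"
    by (metis Rep_Abs_sqmat zero_sqmat_def one_sqmat_def)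
qed
end

instantiation sqmat :: (finite) real_normed_algebra_1
begin
definition norm_sqmat_def: "norm a = onorm (\<lambda>v. Rep_sqmat a *v v)"
definition sgn_sqmat_def: "sgn (a::'a sqmat) = a /\<^sub>R norm a"
definition dist_sqmat_def: "dist (a::'a sqmat) b = norm (a - b)"
definition uniformity_sqmat_def:
  "uniformity = (INF e\<in>{0<..}. principal {(x::'a sqmat, y). dist x y < e})"
definition open_sqmat_def:
  "open (U::'a sqmat set) = (\<forall>x\<in>U. \<forall>\<^sub>F (x', y) in uniformity. x' = x \<longrightarrow> y \<in> U)"
instance
proof
  fix a b :: "'a sqmat" and r :: real and U :: "'a sqmat set"
  note defs = zero_sqmat_def one_sqmat_def plus_sqmat_def times_sqmat_def scaleR_sqmat_def
    Rep_Abs_sqmat Rep_sqmat_inverse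
  note bl = matrix_vector_mul_bounded_linear
  show "sgn a = a /\<^sub>R norm a" "dist a b = norm (a - b)"
    "(uniformity :: ('a sqmat \<times> 'a sqmat) filter) = (INF e\<in>{0<..}. principal {(x, y). dist x y < e})"
    "open U = (\<forall>x\<in>U. \<forall>\<^sub>F (x', y) in uniformity. x' = x \<longrightarrow> y \<in> U)"
    by (simp_all add: sgn_sqmat_def dist_sqmat_def uniformity_sqmat_def open_sqmat_def)
  have "(norm a = 0) = (\<forall>v. Rep_sqmat a *v v = 0)"
    unfolding norm_sqmat_def by (simp add: onorm_eq_0)
  also have "\<dots> = (a = 0)"
    by (metis Rep_Abs_sqmat Rep_sqmat_inverse zero_sqmat_def matrix_eq matrix_vector_mult_0)
  finally show "(norm a = 0) = (a = 0)" .
  show "norm (a + b) \<le> norm a + norm b"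
    using onorm_triangle[OF bl[of "Rep_sqmat a"] bl[of "Rep_sqmat b"]]
    by (simp add: norm_sqmat_def defs matrix_vector_mult_add_rdistrib)
  show "norm (r *\<^sub>R a) = \<bar>r\<bar> * norm a"
    using onorm_scaleR[OF bl[of "Rep_sqmat a"], of r]
    by (simp add: norm_sqmat_def defs scaleR_matrix_vector_assoc)
  show "norm (a * b) \<le> norm a * norm b"
    using onorm_compose[OF bl[of "Rep_sqmat a"] bl[of "Rep_sqmat b"]]
    by (simp add: norm_sqmat_def defs o_def matrix_vector_mul_assoc)
  have "(*v) (mat 1 :: real^'a^'a) = id" by (rule ext) simp
  then show "norm (1::'a sqmat) = 1"
    by (simp add: norm_sqmat_def defs onorm_id)
qed
end

lemma Rep_sqmat_simps:
  "Rep_sqmat (a + b) = Rep_sqmat a + Rep_sqmat b"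
  "Rep_sqmat (a - b) = Rep_sqmat a - Rep_sqmat b"
  "Rep_sqmat (a * b) = Rep_sqmat a ** Rep_sqmat b"
  "Rep_sqmat (r *\<^sub>R a) = r *\<^sub>R Rep_sqmat a"
  "Rep_sqmat 0 = 0"
  "Rep_sqmat 1 = mat 1"
  by (simp_all add: zero_sqmat_def one_sqmat_def plus_sqmat_def minus_sqmat_def
      times_sqmat_def scaleR_sqmat_def Rep_Abs_sqmat)

lemma Abs_sqmat_simps:
  "Abs_sqmat (A + B) = Abs_sqmat A + Abs_sqmat B"
  "Abs_sqmat (A ** B) = Abs_sqmat A * Abs_sqmat B"
  "Abs_sqmat (r *\<^sub>R A) = r *\<^sub>R Abs_sqmat A"
  "Abs_sqmat 0 = 0"
  "Abs_sqmat (mat 1) = 1"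
  by (simp_all add: zero_sqmat_def one_sqmat_def plus_sqmat_def times_sqmat_def
      scaleR_sqmat_def Rep_Abs_sqmat)

lemma Rep_sqmat_power: "Rep_sqmat (a ^ k) = mpow (Rep_sqmat a) k"
  by (induction k) (simp_all add: Rep_sqmat_simps)

lemma bounded_linear_Rep_sqmat: "bounded_linear (Rep_sqmat :: 'n::finite sqmat \<Rightarrow> _)"
proof (rule bounded_linear_intro[where K="real CARD('n) * real CARD('n)"])
  fix a :: "'n sqmat"
  have "norm (Rep_sqmat a) \<le> (\<Sum>i\<in>UNIV. norm (Rep_sqmat a $ i))"
    unfolding norm_vec_def by (rule L2_set_le_sum) simp
  also have "\<dots> \<le> (\<Sum>i\<in>(UNIV::'n set). \<Sum>j\<in>(UNIV::'n set). \<bar>Rep_sqmat a $ i $ j\<bar>)"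
    by (rule sum_mono) (rule norm_le_l1_cart)
  also have "\<dots> \<le> (\<Sum>i\<in>(UNIV::'n set). \<Sum>j\<in>(UNIV::'n set). norm a)"
    unfolding norm_sqmat_def by (intro sum_mono matrix_component_le_onorm)
  finally show "norm (Rep_sqmat a) \<le> norm a * (real CARD('n) * real CARD('n))"
    by (simp add: mult_ac)
qed (simp_all add: Rep_sqmat_simps)

lemma bounded_linear_Abs_sqmat: "bounded_linear (Abs_sqmat :: _ \<Rightarrow> 'n::finite sqmat)"
proof (rule bounded_linear_intro[where K="real CARD('n) * real CARD('n)"])
  fix A :: "real^'n^'n"
  have "norm (Abs_sqmat A) \<le> (\<Sum>i\<in>(UNIV::'n set). \<Sum>j\<in>(UNIV::'n set). \<bar>A $ i $ j\<bar>)"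
    unfolding norm_sqmat_def Rep_Abs_sqmat by (rule onorm_le_matrix_component_sum)
  also have "\<dots> \<le> (\<Sum>i\<in>(UNIV::'n set). \<Sum>j\<in>(UNIV::'n set). norm A)"
    by (intro sum_mono order_trans[OF component_le_norm_cart Finite_Cartesian_Product.norm_nth_le])
  finally show "norm (Abs_sqmat A) \<le> norm A * (real CARD('n) * real CARD('n))"
    by (simp add: mult_ac)
qed (simp_all add: Abs_sqmat_simps)

lemma tendsto_Rep_sqmat_iff: "(f \<longlongrightarrow> l) F \<longleftrightarrow> ((\<lambda>x. Rep_sqmat (f x)) \<longlongrightarrow> Rep_sqmat l) F"
  using bounded_linear.tendsto[OF bounded_linear_Rep_sqmat, of f l F]
    bounded_linear.tendsto[OF bounded_linear_Abs_sqmat, of "\<lambda>x. Rep_sqmat (f x)" "Rep_sqmat l" F]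
  by (auto simp: Rep_sqmat_inverse)

instance sqmat :: (finite) banach
proof
  fix X :: "nat \<Rightarrow> 'a sqmat"
  assume "Cauchy X"
  then have "Cauchy (\<lambda>n. Rep_sqmat (X n))"
    by (rule bounded_linear.Cauchy[OF bounded_linear_Rep_sqmat])
  then obtain L where "(\<lambda>n. Rep_sqmat (X n)) \<longlonglongrightarrow> L"
    using Cauchy_convergent_iff convergent_def by blast
  then have "X \<longlonglongrightarrow> Abs_sqmat L"
    by (simp add: tendsto_Rep_sqmat_iff Rep_Abs_sqmat)
  then show "convergent X" by (auto simp: convergent_def)
qed

section \<open>Exponentials\<close>

lemma norm_exp_minus_one_minus_le:
  fixes x :: "'a::{real_normed_algebra_1,banach}"
  assumes "norm x \<le> 1"
  shows "norm (exp x - 1 - x) \<le> norm x ^ 2"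
proof -
  let ?r = "norm x"
  have sn: "summable (\<lambda>n. norm (inverse (fact (n + 2)) *\<^sub>R (x ^ (n + 2))))"
    using summable_ignore_initial_segment[OF summable_norm_exp[of x], of 2]
    by (simp add: divide_inverse_commute)
  have sr: "summable (\<lambda>n. inverse (fact (n + 2)) * (?r ^ (n + 2)))"
    using summable_ignore_initial_segment[OF summable_exp[of ?r], of 2] by simp
  have "norm (exp x - 1 - x) = norm (\<Sum>n. inverse (fact (n + 2)) *\<^sub>R (x ^ (n + 2)))"
    using exp_first_two_terms[of x] by (simp add: algebra_simps)
  also have "\<dots> \<le> (\<Sum>n. norm (inverse (fact (n + 2)) *\<^sub>R (x ^ (n + 2))))"
    by (rule summable_norm[OF sn])
  also have "\<dots> \<le> (\<Sum>n. inverse (fact (n + 2)) * (?r ^ (n + 2)))"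
    by (intro suminf_le[OF _ sn sr]) (simp add: mult_left_mono norm_power_ineq del: power_Suc)
  also have "\<dots> = exp ?r - 1 - ?r"
    using exp_first_two_terms[of ?r] by simp
  also have "\<dots> \<le> ?r ^ 2" using exp_bound[of ?r] assms by simp
  finally show ?thesis .
qed

lemma norm_power_diff_le:
  fixes a b :: "'a::real_normed_algebra_1"
  assumes "norm a \<le> M" "norm b \<le> M" "1 \<le> M"
  shows "norm (a ^ k - b ^ k) \<le> real k * M ^ k * norm (a - b)"
proof (induction k)
  case (Suc k)
  have "norm (b ^ k) \<le> M ^ k"
    by (rule order_trans[OF norm_power_ineq power_mono[OF assms(2) norm_ge_zero]])
  then have "norm ((a - b) * b ^ k) \<le> norm (a - b) * M ^ k"
    by (metis norm_ge_zero norm_mult_ineq mult_left_mono order_trans)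
  moreover have "norm (a * (a ^ k - b ^ k)) \<le> M * (real k * M ^ k * norm (a - b))"
    by (rule order_trans[OF norm_mult_ineq mult_mono[OF assms(1) Suc]]) (use assms in auto)
  moreover have "M ^ k \<le> M ^ Suc k" using assms(3) by (simp add: power_increasing)
  moreover have "a ^ Suc k - b ^ Suc k = a * (a ^ k - b ^ k) + (a - b) * b ^ k"
    by (simp add: algebra_simps)
  ultimately have "norm (a ^ Suc k - b ^ Suc k)
      \<le> M * (real k * M ^ k * norm (a - b)) + norm (a - b) * M ^ Suc k"
    by (smt (verit) mult_left_mono norm_ge_zero norm_triangle_ineq)
  then show ?case by (simp add: algebra_simps)
qed simp

lemma exp_of_nat_scaleR:
  fixes x :: "'a::{real_normed_algebra_1,banach}"
  shows "exp (real k *\<^sub>R x) = exp x ^ k"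
proof (induction k)
  case (Suc k)
  have "real (Suc k) *\<^sub>R x = x + real k *\<^sub>R x" by (simp add: algebra_simps)
  then show ?case using Suc by (simp add: exp_add_commuting)
qed simp

lemma norm_exp_diff_le:
  fixes a b :: "'a::{real_normed_algebra_1,banach}"
  assumes "norm a \<le> M" "norm b \<le> M" "1 \<le> M"
  shows "norm (exp a - exp b) \<le> exp (2 * M) * norm (a - b)"
proof -
  have bound: "norm ((a ^ n - b ^ n) /\<^sub>R fact n) \<le> (2 * M) ^ n /\<^sub>R fact n * norm (a - b)" for n
  proof -
    have "real n \<le> 2 ^ n"
      using less_exp[of n] by (metis less_imp_le of_nat_le_iff of_nat_numeral of_nat_power)
    then have "real n * M ^ n * norm (a - b) \<le> 2 ^ n * M ^ n * norm (a - b)"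
      using assms(3) by (intro mult_right_mono) auto
    with norm_power_diff_le[OF assms, of n] show ?thesis
      by (simp add: power_mult_distrib mult_ac divide_right_mono)
  qed
  have s2: "summable (\<lambda>n. (2 * M) ^ n /\<^sub>R fact n * norm (a - b))"
    using summable_mult2[OF summable_exp[of "2 * M"], of "norm (a - b)"]
    by (simp add: divide_inverse_commute)
  have sn: "summable (\<lambda>n. norm ((a ^ n - b ^ n) /\<^sub>R fact n))"
    by (rule summable_comparison_test[OF _ s2]) (use bound in auto)
  have "(\<lambda>n. a ^ n /\<^sub>R fact n - b ^ n /\<^sub>R fact n) sums (exp a - exp b)"
    by (intro sums_diff exp_converges)
  then have "norm (exp a - exp b) = norm (\<Sum>n. (a ^ n - b ^ n) /\<^sub>R fact n)"
    by (simp add: sums_iff scaleR_diff_right)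
  also have "\<dots> \<le> (\<Sum>n. norm ((a ^ n - b ^ n) /\<^sub>R fact n))"
    by (rule summable_norm[OF sn])
  also have "\<dots> \<le> (\<Sum>n. (2 * M) ^ n /\<^sub>R fact n * norm (a - b))"
    by (rule suminf_le[OF bound sn s2])
  also have "\<dots> = exp (2 * M) * norm (a - b)"
    using exp_converges[of "2 * M"] by (simp add: suminf_mult2[symmetric] sums_iff)
  finally show ?thesis .
qed

lemma tendsto_exp_banach:
  fixes f :: "_ \<Rightarrow> 'a::{real_normed_algebra_1,banach}"
  assumes "(f \<longlongrightarrow> a) F"
  shows "((\<lambda>x. exp (f x)) \<longlongrightarrow> exp a) F"
proof -
  let ?M = "norm a + 2"
  have "\<forall>\<^sub>F x in F. norm (f x - a) < 1"
    using assms by (auto simp: tendsto_iff dist_norm elim!: allE[of _ 1] eventually_mono)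
  then have "\<forall>\<^sub>F x in F. norm (exp (f x) - exp a) \<le> exp (2 * ?M) * norm (f x - a)"
  proof (rule eventually_mono)
    fix x
    assume "norm (f x - a) < 1"
    then have "norm (f x) \<le> ?M" using norm_triangle_sub[of "f x" a] by simp
    then show "norm (exp (f x) - exp a) \<le> exp (2 * ?M) * norm (f x - a)"
      by (intro norm_exp_diff_le) auto
  qed
  moreover have "((\<lambda>x. exp (2 * ?M) * norm (f x - a)) \<longlongrightarrow> exp (2 * ?M) * norm (a - a)) F"
    by (intro tendsto_intros assms)
  ultimately have "((\<lambda>x. exp (f x) - exp a) \<longlongrightarrow> 0) F"
    using Lim_null_comparison by fastforce
  then show ?thesis by (simp add: Lim_null[symmetric])
qed

lemma tendsto_one_plus_power_exp:
  fixes x :: "nat \<Rightarrow> 'a::{real_normed_algebra_1,banach}"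
  assumes x0: "x \<longlonglongrightarrow> 0" and kx: "(\<lambda>n. real (k n) *\<^sub>R x n) \<longlonglongrightarrow> z"
  shows "(\<lambda>n. (1 + x n) ^ k n) \<longlonglongrightarrow> exp z"
proof -
  let ?d = "\<lambda>n. norm (real (k n) *\<^sub>R x n) * exp (norm (real (k n) *\<^sub>R x n)) * norm (x n)"
  have bound: "norm ((1 + x n) ^ k n - exp (real (k n) *\<^sub>R x n)) \<le> ?d n"
    if "norm (x n) \<le> 1" for n
  proof -
    let ?M = "exp (norm (x n))"
    have "norm (1 + x n) \<le> ?M"
      by (rule order_trans[OF norm_triangle_ineq]) (simp add: exp_ge_add_one_self add.commute)
    then have "norm ((1 + x n) ^ k n - exp (x n) ^ k n) \<le> real (k n) * ?M ^ k n * norm (1 + x n - exp (x n))"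
      by (intro norm_power_diff_le norm_exp) simp_all
    also have "\<dots> \<le> real (k n) * ?M ^ k n * norm (x n) ^ 2"
      using norm_exp_minus_one_minus_le[OF that]
      by (intro mult_left_mono) (simp_all add: norm_minus_commute algebra_simps)
    also have "\<dots> = ?d n"
      using exp_of_nat_mult[of "k n" "norm (x n)"] by (simp add: power2_eq_square)
    finally show ?thesis by (simp add: exp_of_nat_scaleR)
  qed
  have "\<forall>\<^sub>F n in sequentially. norm (x n) \<le> 1"
    using x0 by (auto simp: tendsto_iff dist_norm elim!: allE[of _ 1] eventually_mono)
  then have "\<forall>\<^sub>F n in sequentially. norm ((1 + x n) ^ k n - exp (real (k n) *\<^sub>R x n)) \<le> ?d n"
    by (rule eventually_mono) (rule bound)
  moreover have "?d \<longlonglongrightarrow> 0"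
    using tendsto_mult[OF tendsto_mult[OF tendsto_norm[OF kx] tendsto_exp[OF tendsto_norm[OF kx]]]
        tendsto_norm[OF x0]]
    by simp
  ultimately have "(\<lambda>n. (1 + x n) ^ k n - exp (real (k n) *\<^sub>R x n)) \<longlonglongrightarrow> 0"
    by (rule Lim_null_comparison)
  then have "(\<lambda>n. ((1 + x n) ^ k n - exp (real (k n) *\<^sub>R x n)) + exp (real (k n) *\<^sub>R x n))
      \<longlonglongrightarrow> 0 + exp z"
    by (intro tendsto_add tendsto_exp_banach kx)
  then show ?thesis by simp
qed

lemma power_conjugate:
  fixes p q a :: "'a::monoid_mult"
  assumes "p * q = 1" "q * p = 1"
  shows "(p * a * q) ^ n = p * a ^ n * q"
proof (induction n)
  case (Suc n)
  have "(p * a * q) ^ Suc n = p * a * (q * p) * a ^ n * q"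
    using Suc by (simp add: mult.assoc)
  then show ?case using assms(2) by (simp add: mult.assoc)
qed (simp add: assms(1))

lemma exp_conjugate:
  fixes p q a :: "'a::{real_normed_algebra_1,banach}"
  assumes "p * q = 1" "q * p = 1"
  shows "exp (p * a * q) = p * exp a * q"
proof -
  have "(\<lambda>n. p * (a ^ n /\<^sub>R fact n) * q) sums (p * exp a * q)"
    by (intro sums_mult sums_mult2 exp_converges)
  moreover have "p * (a ^ n /\<^sub>R fact n) * q = (p * a * q) ^ n /\<^sub>R fact n" for n
    by (simp add: power_conjugate[OF assms])
  ultimately show ?thesis
    using exp_converges[of "p * a * q"] by (simp add: sums_unique2)
qed

lemma mexp_conv_exp: "mexp X = Rep_sqmat (exp (Abs_sqmat X))"
proof -
  have "(\<lambda>n. Rep_sqmat (Abs_sqmat X ^ n /\<^sub>R fact n)) sums Rep_sqmat (exp (Abs_sqmat X))"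
    by (rule bounded_linear.sums[OF bounded_linear_Rep_sqmat exp_converges])
  then show ?thesis
    by (simp add: mexp_def sums_iff Rep_sqmat_simps Rep_sqmat_power Rep_Abs_sqmat
        divide_inverse_commute)
qed

lemma mexp_zero [simp]: "mexp 0 = mat 1"
  by (simp add: mexp_conv_exp Abs_sqmat_simps Rep_sqmat_simps)

lemma mexp_add_commuting:
  fixes A B :: "real^'n^'n"
  assumes "A ** B = B ** A"
  shows "mexp (A + B) = mexp A ** mexp B"
proof -
  have "Abs_sqmat A * Abs_sqmat B = Abs_sqmat B * Abs_sqmat A"
    using assms by (simp add: Abs_sqmat_simps[symmetric])
  then show ?thesis
    by (simp add: mexp_conv_exp Abs_sqmat_simps Rep_sqmat_simps exp_add_commuting)
qed

lemma mexp_scaleR_add: "mexp (s *\<^sub>R X) ** mexp (t *\<^sub>R X) = mexp ((s + t) *\<^sub>R (X::real^'n^'n))"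
  by (simp add: mexp_add_commuting[symmetric] matrix_scaleR_left matrix_scaleR_right scaleR_add_left)

lemma mexp_conjugate:
  fixes P Q A :: "real^'n^'n"
  assumes "P ** Q = mat 1" "Q ** P = mat 1"
  shows "mexp (P ** A ** Q) = P ** mexp A ** Q"
  using exp_conjugate[of "Abs_sqmat P" "Abs_sqmat Q" "Abs_sqmat A"] assms
  by (simp add: mexp_conv_exp Abs_sqmat_simps[symmetric] Rep_sqmat_simps Rep_Abs_sqmat)

lemma has_vector_derivative_mexp_scaleR:
  "((\<lambda>s. mexp (s *\<^sub>R X)) has_vector_derivative X) (at 0 within T)"
  using bounded_linear.has_vector_derivative[OF bounded_linear_Rep_sqmat
      exp_scaleR_has_vector_derivative_right[where t=0 and A="Abs_sqmat X" and T=T]]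
  by (simp add: mexp_conv_exp Abs_sqmat_simps Rep_sqmat_simps Rep_Abs_sqmat)

lemma tendsto_mexp:
  assumes "(f \<longlongrightarrow> A) F"
  shows "((\<lambda>x. mexp (f x)) \<longlongrightarrow> mexp A) F"
proof -
  have "((\<lambda>x. exp (Abs_sqmat (f x))) \<longlongrightarrow> exp (Abs_sqmat A)) F"
    by (intro tendsto_exp_banach bounded_linear.tendsto[OF bounded_linear_Abs_sqmat assms])
  then show ?thesis by (simp add: tendsto_Rep_sqmat_iff mexp_conv_exp)
qed

lemma tendsto_mpow_mexp:
  assumes "E \<longlonglongrightarrow> 0" "(\<lambda>n. real (k n) *\<^sub>R E n) \<longlonglongrightarrow> Z"
  shows "(\<lambda>n. mpow (mat 1 + E n) (k n)) \<longlonglongrightarrow> mexp Z"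
proof -
  note Abs_tendsto = bounded_linear.tendsto[OF bounded_linear_Abs_sqmat]
  have "(\<lambda>n. (1 + Abs_sqmat (E n)) ^ k n) \<longlonglongrightarrow> exp (Abs_sqmat Z)"
    using Abs_tendsto[OF assms(1)] Abs_tendsto[OF assms(2)]
    by (intro tendsto_one_plus_power_exp) (simp_all add: Abs_sqmat_simps)
  then show ?thesis
    by (simp add: tendsto_Rep_sqmat_iff Rep_sqmat_power Rep_sqmat_simps Rep_Abs_sqmat
        mexp_conv_exp)
qed

lemma matrix_inv_mexp: "matrix_inv (mexp X) = mexp (- X)"
  using mexp_scaleR_add[of 1 X "-1"] mexp_scaleR_add[of "-1" X 1]
  by (intro matrix_inv_unique) simp_all

lemma mexp_mult_mexp_uminus: "mexp X ** mexp (- X) = mat 1"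
  using mexp_scaleR_add[of 1 X "-1"] by simp

lemma difference_quotient_LIMSEQ:
  fixes f :: "real \<Rightarrow> 'a::real_normed_vector"
  assumes f: "(f has_vector_derivative v) (at 0)" and c: "c \<longlonglongrightarrow> 0" "\<And>n. c n \<noteq> 0"
  shows "(\<lambda>n. (1 / c n) *\<^sub>R (f (c n) - f 0)) \<longlonglongrightarrow> v"
proof -
  let ?g = "\<lambda>y. (f y - f 0 - y *\<^sub>R v) /\<^sub>R norm y"
  have "(?g \<longlongrightarrow> 0) (at 0)"
    using f unfolding has_vector_derivative_def has_derivative_at_within by simp
  moreover have "filterlim c (at 0) sequentially"
    using c by (intro filterlim_atI) simp_all
  ultimately have g: "(\<lambda>n. ?g (c n)) \<longlonglongrightarrow> 0"
    by (rule filterlim_compose)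
  have eq: "norm ((1 / c n) *\<^sub>R (f (c n) - f 0) - v) = norm (?g (c n))" for n
  proof -
    have "(1 / c n) *\<^sub>R (f (c n) - f 0) - v = (1 / c n) *\<^sub>R (f (c n) - f 0 - c n *\<^sub>R v)"
      using c(2)[of n] by (simp add: algebra_simps)
    then show ?thesis using c(2)[of n] by (simp add: abs_div divide_inverse_commute)
  qed
  have "(\<lambda>n. norm ((1 / c n) *\<^sub>R (f (c n) - f 0) - v)) \<longlonglongrightarrow> 0"
    unfolding eq by (rule tendsto_norm_zero[OF g])
  then have "(\<lambda>n. (1 / c n) *\<^sub>R (f (c n) - f 0) - v) \<longlonglongrightarrow> 0"
    by (rule tendsto_norm_zero_cancel)
  then show ?thesis by (simp add: Lim_null[symmetric])
qed

section \<open>Closed matrix groups and their Lie algebras\<close>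

lemma closed_matrix_group_one: "closed_matrix_group G \<Longrightarrow> mat 1 \<in> G"
  and closed_matrix_group_mult: "closed_matrix_group G \<Longrightarrow> a \<in> G \<Longrightarrow> b \<in> G \<Longrightarrow> a ** b \<in> G"
  and closed_matrix_group_inv: "closed_matrix_group G \<Longrightarrow> a \<in> G \<Longrightarrow> matrix_inv a \<in> G"
  and closed_matrix_group_invertible: "closed_matrix_group G \<Longrightarrow> a \<in> G \<Longrightarrow> invertible a"
  unfolding closed_matrix_group_def by blast+

lemma closed_pair_group_one: "closed_pair_group U \<Longrightarrow> (mat 1, mat 1) \<in> U"
  and closed_pair_group_mult:
    "closed_pair_group U \<Longrightarrow> (a, b) \<in> U \<Longrightarrow> (c, d) \<in> U \<Longrightarrow> (a ** c, b ** d) \<in> U"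
  and closed_pair_group_inv:
    "closed_pair_group U \<Longrightarrow> (a, b) \<in> U \<Longrightarrow> (matrix_inv a, matrix_inv b) \<in> U"
  and closed_pair_group_invertible:
    "closed_pair_group U \<Longrightarrow> (a, b) \<in> U \<Longrightarrow> invertible a \<and> invertible b"
  unfolding closed_pair_group_def by blast+

lemma mpow_in_closed_matrix_group: "closed_matrix_group G \<Longrightarrow> a \<in> G \<Longrightarrow> mpow a k \<in> G"
  by (induction k) (simp_all add: closed_matrix_group_one closed_matrix_group_mult)

lemma mpow_in_closed_pair_group:
  "closed_pair_group U \<Longrightarrow> (a, b) \<in> U \<Longrightarrow> (mpow a k, mpow b k) \<in> U"
  by (induction k) (simp_all add: closed_pair_group_one closed_pair_group_mult)

lemma tendsto_nat_floor_divide_mult: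
  fixes c :: "nat \<Rightarrow> real"
  assumes c: "c \<longlonglongrightarrow> 0" "\<And>n. c n > 0" and s: "s \<ge> 0"
  shows "(\<lambda>n. real (nat \<lfloor>s / c n\<rfloor>) * c n) \<longlonglongrightarrow> s"
proof -
  have bound: "\<bar>real (nat \<lfloor>s / c n\<rfloor>) * c n - s\<bar> \<le> c n" for n
  proof -
    have "of_int \<lfloor>s / c n\<rfloor> \<le> s / c n" "s / c n - 1 < of_int \<lfloor>s / c n\<rfloor>"
      by linarith+
    then have "of_int \<lfloor>s / c n\<rfloor> * c n \<le> s / c n * c n"
      and "(s / c n - 1) * c n < of_int \<lfloor>s / c n\<rfloor> * c n"
      using c(2)[of n] by (simp_all only: mult_right_mono mult_strict_right_mono less_imp_le)
    then have "of_int \<lfloor>s / c n\<rfloor> * c n \<le> s" "s - c n < of_int \<lfloor>s / c n\<rfloor> * c n"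
      using c(2)[of n] by (simp_all add: algebra_simps)
    moreover have "real (nat \<lfloor>s / c n\<rfloor>) = of_int \<lfloor>s / c n\<rfloor>"
      using s c(2)[of n] by simp
    ultimately show ?thesis by (simp only:)
  qed
  have "(\<lambda>n. real (nat \<lfloor>s / c n\<rfloor>) * c n - s) \<longlonglongrightarrow> 0"
    by (rule Lim_null_comparison[where g=c, OF always_eventually]) (use bound c in auto)
  then show ?thesis by (simp add: Lim_null[symmetric])
qed

lemma tendsto_mpow_nat_floor_mexp:
  assumes c: "c \<longlonglongrightarrow> 0" "\<And>n. c n > 0"
    and h: "(\<lambda>n. (1 / c n) *\<^sub>R (h n - mat 1)) \<longlonglongrightarrow> Z" and s: "s \<ge> 0"
  shows "(\<lambda>n. mpow (h n) (nat \<lfloor>s / c n\<rfloor>)) \<longlonglongrightarrow> mexp (s *\<^sub>R Z)"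
proof -
  let ?E = "\<lambda>n. h n - mat 1" and ?k = "\<lambda>n. nat \<lfloor>s / c n\<rfloor>"
  have eq: "c n *\<^sub>R ((1 / c n) *\<^sub>R M) = M"
    "(real (?k n) * c n) *\<^sub>R ((1 / c n) *\<^sub>R M) = real (?k n) *\<^sub>R M"
    for n and M :: "real^'n^'n"
    using c(2)[of n] by simp_all
  have "(\<lambda>n. c n *\<^sub>R ((1 / c n) *\<^sub>R ?E n)) \<longlonglongrightarrow> 0 *\<^sub>R Z"
    by (intro tendsto_scaleR c h)
  moreover have "(\<lambda>n. (real (?k n) * c n) *\<^sub>R ((1 / c n) *\<^sub>R ?E n)) \<longlonglongrightarrow> s *\<^sub>R Z"
    by (intro tendsto_scaleR tendsto_nat_floor_divide_mult c s h)
  ultimately have "?E \<longlonglongrightarrow> 0" "(\<lambda>n. real (?k n) *\<^sub>R ?E n) \<longlonglongrightarrow> s *\<^sub>R Z"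
    unfolding eq by simp_all
  from tendsto_mpow_mexp[OF this] show ?thesis by simp
qed

lemma closed_matrix_group_mexp_neg:
  "closed_matrix_group G \<Longrightarrow> mexp (s *\<^sub>R Z) \<in> G \<Longrightarrow> mexp ((- s) *\<^sub>R Z) \<in> G"
  using closed_matrix_group_inv[of G "mexp (s *\<^sub>R Z)"] by (simp add: matrix_inv_mexp)

text \<open>A closed subgroup contains every one-parameter group it is tangent to at the identity:
  \<open>mexp (s Z)\<close> is the limit of the powers \<open>h\<^sub>n ^ k\<^sub>n\<close> with \<open>k\<^sub>n c\<^sub>n \<rightarrow> s\<close>.\<close>

lemma difference_quotient_limit_in_lie_alg:
  assumes G: "closed_matrix_group G" and h: "\<And>n. h n \<in> G"
    and c: "c \<longlonglongrightarrow> 0" "\<And>n. c n > 0"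
    and Z: "(\<lambda>n. (1 / c n) *\<^sub>R (h n - mat 1)) \<longlonglongrightarrow> Z"
  shows "Z \<in> lie_alg G"
proof -
  have nonneg: "mexp (s *\<^sub>R Z) \<in> G" if "s \<ge> 0" for s
  proof (rule closed_sequentially)
    show "closed G" using G by (simp add: closed_matrix_group_def)
    show "mpow (h n) (nat \<lfloor>s / c n\<rfloor>) \<in> G" for n
      by (rule mpow_in_closed_matrix_group[OF G h])
    show "(\<lambda>n. mpow (h n) (nat \<lfloor>s / c n\<rfloor>)) \<longlonglongrightarrow> mexp (s *\<^sub>R Z)"
      by (rule tendsto_mpow_nat_floor_mexp[OF c Z that])
  qed
  have "mexp (s *\<^sub>R Z) \<in> G" for s
  proof (cases "s \<ge> 0")
    case False
    then show ?thesis using closed_matrix_group_mexp_neg[OF G nonneg[of "- s"]] by simp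
  qed (rule nonneg)
  then show ?thesis by (simp add: lie_alg_def)
qed

lemma difference_quotient_limit_in_lie_alg_pair:
  assumes U: "closed_pair_group U" and h: "\<And>n. h n \<in> U"
    and c: "c \<longlonglongrightarrow> 0" "\<And>n. c n > 0"
    and Z1: "(\<lambda>n. (1 / c n) *\<^sub>R (fst (h n) - mat 1)) \<longlonglongrightarrow> Z1"
    and Z2: "(\<lambda>n. (1 / c n) *\<^sub>R (snd (h n) - mat 1)) \<longlonglongrightarrow> Z2"
  shows "(Z1, Z2) \<in> lie_alg_pair U"
proof -
  have nonneg: "(mexp (s *\<^sub>R Z1), mexp (s *\<^sub>R Z2)) \<in> U" if "s \<ge> 0" for s
  proof (rule closed_sequentially)
    show "closed U" using U by (simp add: closed_pair_group_def)
    show "(mpow (fst (h n)) (nat \<lfloor>s / c n\<rfloor>), mpow (snd (h n)) (nat \<lfloor>s / c n\<rfloor>)) \<in> U" for n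
      using mpow_in_closed_pair_group[OF U, of "fst (h n)" "snd (h n)"] h[of n] by simp
    show "(\<lambda>n. (mpow (fst (h n)) (nat \<lfloor>s / c n\<rfloor>), mpow (snd (h n)) (nat \<lfloor>s / c n\<rfloor>)))
        \<longlonglongrightarrow> (mexp (s *\<^sub>R Z1), mexp (s *\<^sub>R Z2))"
      by (intro tendsto_Pair tendsto_mpow_nat_floor_mexp c Z1 Z2 that)
  qed
  have "(mexp (s *\<^sub>R Z1), mexp (s *\<^sub>R Z2)) \<in> U" for s
    using nonneg[of s] nonneg[of "- s"]
      closed_pair_group_inv[OF U, of "mexp ((- s) *\<^sub>R Z1)" "mexp ((- s) *\<^sub>R Z2)"]
    by (cases "s \<ge> 0") (simp_all add: matrix_inv_mexp)
  then show ?thesis by (simp add: lie_alg_pair_def)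
qed

lemma lie_alg_scaleR: "X \<in> lie_alg G \<Longrightarrow> c *\<^sub>R X \<in> lie_alg G"
  by (simp add: lie_alg_def)

lemma lie_alg_add:
  assumes G: "closed_matrix_group G" and X: "X \<in> lie_alg G" and Y: "Y \<in> lie_alg G"
  shows "X + Y \<in> lie_alg G"
proof -
  define f where "f s = mexp (s *\<^sub>R X) ** mexp (s *\<^sub>R Y)" for s
  define c where "c = (\<lambda>n. inverse (real (Suc n)))"
  have "(f has_vector_derivative (mexp (0 *\<^sub>R X) ** Y + X ** mexp (0 *\<^sub>R Y))) (at 0)"
    unfolding f_def by (intro matrix_mult_has_vector_derivative has_vector_derivative_mexp_scaleR)
  then have "(f has_vector_derivative (X + Y)) (at 0)"
    by (simp add: add.commute)
  moreover have c: "c \<longlonglongrightarrow> 0" "\<And>n. c n > 0"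
    using LIMSEQ_inverse_real_of_nat by (simp_all add: c_def)
  ultimately have "(\<lambda>n. (1 / c n) *\<^sub>R (f (c n) - f 0)) \<longlonglongrightarrow> X + Y"
    by (intro difference_quotient_LIMSEQ) (simp_all add: c_def)
  then have lim: "(\<lambda>n. (1 / c n) *\<^sub>R (f (c n) - mat 1)) \<longlonglongrightarrow> X + Y"
    by (simp add: f_def)
  have "f (c n) \<in> G" for n
    using X Y by (simp add: f_def lie_alg_def closed_matrix_group_mult[OF G])
  then show ?thesis
    by (rule difference_quotient_limit_in_lie_alg[OF G _ c lim])
qed

lemma subspace_lie_alg:
  assumes "closed_matrix_group G"
  shows "subspace (lie_alg G)"
proof -
  have "0 \<in> lie_alg G" using closed_matrix_group_one[OF assms] by (simp add: lie_alg_def)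
  then show ?thesis
    unfolding subspace_def by (auto intro: lie_alg_add[OF assms] lie_alg_scaleR)
qed

lemma lie_alg_mono: "K \<subseteq> G \<Longrightarrow> lie_alg K \<subseteq> lie_alg G"
  unfolding lie_alg_def by blast

lemma lie_alg_pair_subset:
  "U \<subseteq> K \<times> K \<Longrightarrow> lie_alg_pair U \<subseteq> lie_alg K \<times> lie_alg K"
  unfolding lie_alg_pair_def lie_alg_def by blast

lemma Ad_in_lie_alg:
  assumes G: "closed_matrix_group G" and g: "g \<in> G" and X: "X \<in> lie_alg G"
  shows "Ad g X \<in> lie_alg G"
proof -
  have g_inv: "invertible g" by (rule closed_matrix_group_invertible[OF G g])
  have "mexp (s *\<^sub>R Ad g X) = g ** mexp (s *\<^sub>R X) ** matrix_inv g" for s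
    using mexp_conjugate[OF matrix_inv_right[OF g_inv] matrix_inv_left[OF g_inv], of "s *\<^sub>R X"]
    by (simp add: Ad_def matrix_scaleR_left matrix_scaleR_right)
  then show ?thesis
    using X g closed_matrix_group_inv[OF G g]
    by (simp add: lie_alg_def closed_matrix_group_mult[OF G])
qed

lemma Ad_Ad_matrix_inv: "invertible g \<Longrightarrow> Ad g (Ad (matrix_inv g) X) = X"
  and Ad_matrix_inv_Ad: "invertible g \<Longrightarrow> Ad (matrix_inv g) (Ad g X) = X"
  by (simp_all add: Ad_def matrix_mul_assoc matrix_inv_matrix_inv matrix_inv_left matrix_inv_right,
      simp_all add: matrix_mul_assoc[symmetric] matrix_inv_left matrix_inv_right)

lemma tangent_space_closed_matrix_group:
  assumes G: "closed_matrix_group G" and a: "a \<in> G"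
  shows "v \<in> tangent_space G a \<longleftrightarrow> matrix_inv a ** v \<in> lie_alg G"
proof
  have a_inv: "a ** matrix_inv a = mat 1" "matrix_inv a ** a = mat 1"
    using matrix_inv_right matrix_inv_left closed_matrix_group_invertible[OF G a] by blast+
  have mult_linear: "bounded_linear (\<lambda>M. b ** M)" for b :: "real^'n^'n"
    by (rule bounded_bilinear.bounded_linear_right[OF bounded_bilinear_matrix_mult])
  show "matrix_inv a ** v \<in> lie_alg G" if v: "v \<in> tangent_space G a"
  proof -
    obtain \<gamma> where \<gamma>: "\<gamma> 0 = a" "\<And>s. \<gamma> s \<in> G" "(\<gamma> has_vector_derivative v) (at 0)"
      using v unfolding tangent_space_def by blast
    define c where "c = (\<lambda>n. inverse (real (Suc n)))"
    have c: "c \<longlonglongrightarrow> 0" "\<And>n. c n > 0" "\<And>n. c n \<noteq> 0"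
      using LIMSEQ_inverse_real_of_nat by (simp_all add: c_def)
    have "((\<lambda>s. matrix_inv a ** \<gamma> s) has_vector_derivative matrix_inv a ** v) (at 0)"
      by (rule bounded_linear.has_vector_derivative[OF mult_linear \<gamma>(3)])
    from difference_quotient_LIMSEQ[OF this c(1,3)]
    have "(\<lambda>n. (1 / c n) *\<^sub>R (matrix_inv a ** \<gamma> (c n) - mat 1)) \<longlonglongrightarrow> matrix_inv a ** v"
      by (simp add: \<gamma>(1) a_inv)
    then show ?thesis
      using closed_matrix_group_mult[OF G closed_matrix_group_inv[OF G a] \<gamma>(2)]
      by (intro difference_quotient_limit_in_lie_alg[OF G _ c(1,2)])
  qed
  show "v \<in> tangent_space G a" if X: "matrix_inv a ** v \<in> lie_alg G"
  proof -
    let ?\<gamma> = "\<lambda>s. a ** mexp (s *\<^sub>R (matrix_inv a ** v))"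
    have "(?\<gamma> has_vector_derivative a ** (matrix_inv a ** v)) (at 0)"
      by (rule bounded_linear.has_vector_derivative[OF mult_linear has_vector_derivative_mexp_scaleR])
    moreover have "?\<gamma> s \<in> G" for s
      using X a by (simp add: lie_alg_def closed_matrix_group_mult[OF G])
    ultimately show ?thesis
      unfolding tangent_space_def using a_inv by (intro CollectI exI[of _ ?\<gamma>]) (simp add: matrix_mul_assoc)
  qed
qed

lemma tangent_space_Times:
  "tangent_space (A \<times> B) (a, b) = tangent_space A a \<times> tangent_space B b"
proof (intro set_eqI iffI)
  fix p assume "p \<in> tangent_space (A \<times> B) (a, b)"
  then obtain \<gamma> where \<gamma>: "\<gamma> 0 = (a, b)" "\<And>s. \<gamma> s \<in> A \<times> B" "(\<gamma> has_vector_derivative p) (at 0)"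
    unfolding tangent_space_def by blast
  have "((\<lambda>s. fst (\<gamma> s)) has_vector_derivative fst p) (at 0)"
    by (rule bounded_linear.has_vector_derivative[OF bounded_linear_fst \<gamma>(3)])
  moreover have "((\<lambda>s. snd (\<gamma> s)) has_vector_derivative snd p) (at 0)"
    by (rule bounded_linear.has_vector_derivative[OF bounded_linear_snd \<gamma>(3)])
  ultimately show "p \<in> tangent_space A a \<times> tangent_space B b"
    using \<gamma> unfolding tangent_space_def mem_Times_iff
    by (intro conjI CollectI exI[of _ "\<lambda>s. fst (\<gamma> s)"] exI[of _ "\<lambda>s. snd (\<gamma> s)"])
       (auto simp: mem_Times_iff)
next
  fix p assume "p \<in> tangent_space A a \<times> tangent_space B b"
  then obtain \<gamma>1 \<gamma>2 where
    \<gamma>1: "\<gamma>1 0 = a" "\<And>s. \<gamma>1 s \<in> A" "(\<gamma>1 has_vector_derivative fst p) (at 0)" and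
    \<gamma>2: "\<gamma>2 0 = b" "\<And>s. \<gamma>2 s \<in> B" "(\<gamma>2 has_vector_derivative snd p) (at 0)"
    unfolding tangent_space_def mem_Times_iff by blast
  have "((\<lambda>s. (\<gamma>1 s, \<gamma>2 s)) has_vector_derivative (fst p, snd p)) (at 0)"
    by (rule has_vector_derivative_Pair[OF \<gamma>1(3) \<gamma>2(3)])
  with \<gamma>1 \<gamma>2 show "p \<in> tangent_space (A \<times> B) (a, b)"
    unfolding tangent_space_def by (intro CollectI exI[of _ "\<lambda>s. (\<gamma>1 s, \<gamma>2 s)"]) simp
qed

section \<open>Orthogonal splitting of the Lie algebra\<close>

lemma orthogonal_projection_extend:
  fixes B :: "'a::real_vector \<Rightarrow> 'a \<Rightarrow> real"
  assumes B: "bilinear B" and b: "B b b \<noteq> 0" "\<forall>Z\<in>V. B b Z = 0"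
    and Y: "\<forall>Z\<in>V. B (X - Y) Z = 0" and Z: "Z \<in> V"
  shows "B (X - (Y + (B (X - Y) b / B b b) *\<^sub>R b)) (Z + r *\<^sub>R b) = 0"
proof -
  let ?c = "B (X - Y) b / B b b"
  have "B (X - (Y + ?c *\<^sub>R b)) (Z + r *\<^sub>R b) = B ((X - Y) - ?c *\<^sub>R b) (Z + r *\<^sub>R b)"
    by (simp add: algebra_simps)
  also have "\<dots> = B (X - Y) Z - ?c * B b Z + r * (B (X - Y) b - ?c * B b b)"
    by (simp only: bilinear_lsub[OF B] bilinear_lmul[OF B] bilinear_radd[OF B]
        bilinear_rmul[OF B] real_scaleR_def)
  also have "\<dots> = 0"
    using b Y Z by simp
  finally show ?thesis .
qed

lemma orthogonal_projection_onto_span_exists: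
  fixes B :: "'a::real_vector \<Rightarrow> 'a \<Rightarrow> real"
  assumes g: "subspace g" and B: "bilinear B" and pos: "\<forall>X\<in>g. X \<noteq> 0 \<longrightarrow> B X X > 0"
    and S: "finite S" "S \<subseteq> g" and X: "X \<in> g"
  shows "\<exists>Y\<in>span S. \<forall>Z\<in>span S. B (X - Y) Z = 0"
  using S X
proof (induction S arbitrary: X rule: finite_induct)
  case empty
  show ?case by (auto simp: bilinear_rzero[OF B])
next
  case (insert a S)
  have span_S: "span S \<subseteq> span (insert a S)" by (rule span_mono) blast
  obtain Ya where Ya: "Ya \<in> span S" "\<forall>Z\<in>span S. B (a - Ya) Z = 0"
    using insert by blast
  define a' where "a' = a - Ya"
  show ?case
  proof (cases "a' = 0")
    case True
    then have "span (insert a S) = span S"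
      using Ya(1) by (simp add: a'_def span_redundant)
    then show ?thesis using insert by simp
  next
    case False
    have "span S \<subseteq> g" using insert.prems(1) g by (simp add: span_minimal)
    then have "a' \<in> g" using insert.prems(1) Ya(1) g by (auto simp: a'_def subspace_diff)
    then have a'_pos: "B a' a' \<noteq> 0" using pos False by fastforce
    obtain Y where Y: "Y \<in> span S" "\<forall>Z\<in>span S. B (X - Y) Z = 0"
      using insert by blast
    have "a' \<in> span (insert a S)"
      unfolding a'_def by (rule span_diff) (use Ya(1) span_S in \<open>auto intro: span_base\<close>)
    then have "Y + (B (X - Y) a' / B a' a') *\<^sub>R a' \<in> span (insert a S)"
      using Y(1) span_S by (intro span_add span_scale) auto
    moreover have "B (X - (Y + (B (X - Y) a' / B a' a') *\<^sub>R a')) Z = 0"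
      if Z: "Z \<in> span (insert a S)" for Z
    proof -
      obtain r where "Z - r *\<^sub>R a \<in> span S" using Z by (auto simp: span_insert)
      then have "Z - r *\<^sub>R a' \<in> span S"
        using span_add[OF _ span_scale[OF Ya(1)], of "Z - r *\<^sub>R a" r]
        by (simp add: a'_def algebra_simps)
      from orthogonal_projection_extend[OF B a'_pos _ Y(2) this, of r] Ya(2)
      show ?thesis by (simp add: a'_def)
    qed
    ultimately show ?thesis by blast
  qed
qed

locale orthogonal_splitting =
  fixes B :: "'n::finite mat \<Rightarrow> 'n mat \<Rightarrow> real" and g k :: "'n mat set"
  assumes subspace_g: "subspace g" and subspace_k: "subspace k" and k_subset_g: "k \<subseteq> g"
    and bilinear: "bilinear B" and positive: "\<forall>X\<in>g. X \<noteq> 0 \<longrightarrow> B X X > 0"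
begin

lemma kcomp_unique:
  assumes "Y1 \<in> k" "Y2 \<in> k" "X - Y1 \<in> perp_in B g k" "X - Y2 \<in> perp_in B g k"
  shows "Y1 = Y2"
proof -
  have D: "Y1 - Y2 \<in> k" using assms subspace_k by (simp add: subspace_diff)
  have "B (Y1 - Y2) (Y1 - Y2) = B (X - Y2) (Y1 - Y2) - B (X - Y1) (Y1 - Y2)"
    by (simp add: bilinear_lsub[OF bilinear])
  also have "\<dots> = 0" using assms(3,4) D by (simp add: perp_in_def)
  finally show ?thesis using positive D k_subset_g by force
qed

lemma kcomp_exists:
  assumes "X \<in> g"
  shows "\<exists>Y. Y \<in> k \<and> X - Y \<in> perp_in B g k"
proof -
  obtain S where S: "S \<subseteq> k" "independent S" "span S = k"
    using basis_exists[of k] span_subspace[OF _ _ subspace_k] by metis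
  then obtain Y where "Y \<in> k" "\<forall>Z\<in>k. B (X - Y) Z = 0"
    using orthogonal_projection_onto_span_exists[OF subspace_g bilinear positive _ _ assms, of S]
      independent_bound k_subset_g by auto
  moreover have "X - Y \<in> g" using assms \<open>Y \<in> k\<close> k_subset_g subspace_g by (auto simp: subspace_diff)
  ultimately show ?thesis by (auto simp: perp_in_def)
qed

lemma kcomp_decomposition: "X \<in> g \<Longrightarrow> kcomp B g k X \<in> k \<and> X - kcomp B g k X \<in> perp_in B g k"
  unfolding kcomp_def
proof (rule theI')
  show "X \<in> g \<Longrightarrow> \<exists>!Y. Y \<in> k \<and> X - Y \<in> perp_in B g k"
    using kcomp_exists kcomp_unique by (metis (no_types, lifting))
qed

lemma kcomp_eqI:
  assumes Y: "Y \<in> k" "X - Y \<in> perp_in B g k"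
  shows "kcomp B g k X = Y"
proof -
  have "X \<in> g"
    using Y k_subset_g subspace_g subspace_add[of g "X - Y" Y] by (auto simp: perp_in_def)
  then show ?thesis using kcomp_decomposition[of X] kcomp_unique[of "kcomp B g k X" Y X] Y by blast
qed

lemma pcomp_plus_scaleR_kcomp_in:
  "X \<in> g \<Longrightarrow> pcomp B g k X + c *\<^sub>R kcomp B g k X \<in> g"
  using kcomp_decomposition[of X] k_subset_g subspace_g
  by (auto simp: pcomp_def perp_in_def intro: subspace_add subspace_scale)

lemma cheeger_phi_in: "X \<in> g \<Longrightarrow> cheeger_phi B g k t X \<in> g"
  unfolding cheeger_phi_def by (rule pcomp_plus_scaleR_kcomp_in)

lemma rescale_kcomp_twice:
  fixes c d :: real
  assumes "X \<in> g"
  defines "Y \<equiv> pcomp B g k X + c *\<^sub>R kcomp B g k X"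
  shows "pcomp B g k Y + d *\<^sub>R kcomp B g k Y = pcomp B g k X + (d * c) *\<^sub>R kcomp B g k X"
proof -
  have "kcomp B g k Y = c *\<^sub>R kcomp B g k X"
    using kcomp_decomposition[OF assms(1)] subspace_k
    by (intro kcomp_eqI) (simp_all add: Y_def pcomp_def subspace_scale)
  then show ?thesis by (simp add: Y_def pcomp_def)
qed

lemma bij_betw_cheeger_phi:
  assumes "t > 0"
  shows "bij_betw (cheeger_phi B g k t) g g"
proof (rule bij_betw_byWitness)
  let ?psi = "\<lambda>Y. pcomp B g k Y + ((t + 1) / t) *\<^sub>R kcomp B g k Y"
  have inverse: "(t + 1) / t * (t / (t + 1)) = 1" "t / (t + 1) * ((t + 1) / t) = 1"
    using assms by simp_all
  show "\<forall>X\<in>g. ?psi (cheeger_phi B g k t X) = X"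
  proof
    fix X assume "X \<in> g"
    then have "?psi (cheeger_phi B g k t X)
        = pcomp B g k X + ((t + 1) / t * (t / (t + 1))) *\<^sub>R kcomp B g k X"
      unfolding cheeger_phi_def by (rule rescale_kcomp_twice)
    then show "?psi (cheeger_phi B g k t X) = X" unfolding inverse by (simp add: pcomp_def)
  qed
  show "\<forall>Y\<in>g. cheeger_phi B g k t (?psi Y) = Y"
  proof
    fix Y assume "Y \<in> g"
    then have "cheeger_phi B g k t (?psi Y)
        = pcomp B g k Y + (t / (t + 1) * ((t + 1) / t)) *\<^sub>R kcomp B g k Y"
      unfolding cheeger_phi_def by (rule rescale_kcomp_twice)
    then show "cheeger_phi B g k t (?psi Y) = Y" unfolding inverse by (simp add: pcomp_def)
  qed
  show "cheeger_phi B g k t ` g \<subseteq> g" "?psi ` g \<subseteq> g"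
    by (auto simp: cheeger_phi_in pcomp_plus_scaleR_kcomp_in)
qed

end

section \<open>The tangent space of an orbit\<close>

text \<open>The orbit of \<open>(a, 1)\<close> is parametrised by triples \<open>(g, v\<^sub>1, v\<^sub>2) \<in> G \<times> U\<close>, where
  \<open>(v\<^sub>1, v\<^sub>2)\<close> plays the role of \<open>(u\<^sub>1\<^sup>-\<^sup>1, u\<^sub>2\<^sup>-\<^sup>1)\<close>.\<close>

definition orbit_param :: "'n::finite mat \<Rightarrow> 'n mat \<times> 'n mat \<times> 'n mat \<Rightarrow> 'n mat \<times> 'n mat" where
  "orbit_param a = (\<lambda>(g, v1, v2). (g ** a ** v1, g ** v2))"

definition orbit_param_diff :: "'n::finite mat \<Rightarrow> 'n mat \<times> 'n mat \<times> 'n mat \<Rightarrow> 'n mat \<times> 'n mat" where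
  "orbit_param_diff a = (\<lambda>(X, V1, V2). (X ** a + a ** V1, X + V2))"

definition stabilizer ::
    "'n::finite mat set \<Rightarrow> ('n mat \<times> 'n mat) set \<Rightarrow> 'n mat \<Rightarrow> ('n mat \<times> 'n mat \<times> 'n mat) set" where
  "stabilizer G U a = {k \<in> G \<times> U. orbit_param a k = (a, mat 1)}"

definition fibre_mult ::
    "'n::finite mat \<times> 'n mat \<times> 'n mat \<Rightarrow> 'n mat \<times> 'n mat \<times> 'n mat \<Rightarrow> 'n mat \<times> 'n mat \<times> 'n mat" where
  "fibre_mult = (\<lambda>(g, v1, v2) (k0, k1, k2). (g ** k0, k1 ** v1, k2 ** v2))"

definition mexp_triple :: "'n::finite mat \<times> 'n mat \<times> 'n mat \<Rightarrow> 'n mat \<times> 'n mat \<times> 'n mat" where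
  "mexp_triple = (\<lambda>(X, V1, V2). (mexp X, mexp V1, mexp V2))"

abbreviation one_triple :: "'n::finite mat \<times> 'n mat \<times> 'n mat" where
  "one_triple \<equiv> (mat 1, mat 1, mat 1)"

lemma orbit_param_simp [simp]: "orbit_param a (g, v1, v2) = (g ** a ** v1, g ** v2)"
  and orbit_param_diff_simp [simp]: "orbit_param_diff a (X, V1, V2) = (X ** a + a ** V1, X + V2)"
  and fibre_mult_simp [simp]: "fibre_mult (g, v1, v2) (k0, k1, k2) = (g ** k0, k1 ** v1, k2 ** v2)"
  and mexp_triple_simp [simp]: "mexp_triple (X, V1, V2) = (mexp X, mexp V1, mexp V2)"
  by (simp_all add: orbit_param_def orbit_param_diff_def fibre_mult_def mexp_triple_def)

lemma orbit_param_diff_scaleR: "orbit_param_diff a (c *\<^sub>R Z) = c *\<^sub>R orbit_param_diff a Z"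
  by (cases Z) (simp add: matrix_scaleR_left matrix_scaleR_right scaleR_add_right)

lemma orbit_eq_image_orbit_param:
  assumes "closed_pair_group U"
  shows "orbit G U (a, mat 1) = orbit_param a ` (G \<times> U)"
proof (intro set_eqI iffI)
  fix y assume "y \<in> orbit G U (a, mat 1)"
  then obtain g u1 u2 where "g \<in> G" "(u1, u2) \<in> U" "y = act g (u1, u2) (a, mat 1)"
    unfolding orbit_def by auto
  with assms show "y \<in> orbit_param a ` (G \<times> U)"
    by (intro image_eqI[of _ _ "(g, matrix_inv u1, matrix_inv u2)"])
       (auto simp: act_def closed_pair_group_inv)
next
  fix y assume "y \<in> orbit_param a ` (G \<times> U)"
  then obtain g v1 v2 where "g \<in> G" "(v1, v2) \<in> U" "y = orbit_param a (g, v1, v2)"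
    by auto
  with assms show "y \<in> orbit G U (a, mat 1)"
    unfolding orbit_def
    by (intro CollectI exI[of _ g] exI[of _ "(matrix_inv v1, matrix_inv v2)"])
       (auto simp: act_def closed_pair_group_inv closed_pair_group_invertible matrix_inv_matrix_inv)
qed

lemma tendsto_orbit_param: "(h \<longlongrightarrow> l) F \<Longrightarrow> ((\<lambda>n. orbit_param a (h n)) \<longlongrightarrow> orbit_param a l) F"
  unfolding orbit_param_def case_prod_beta
  by (intro tendsto_Pair tendsto_matrix_mult tendsto_fst tendsto_snd tendsto_const)

lemma tendsto_fibre_mult:
  "(h \<longlongrightarrow> l) F \<Longrightarrow> ((\<lambda>n. fibre_mult (h n) k) \<longlongrightarrow> fibre_mult l k) F"
  unfolding fibre_mult_def case_prod_beta
  by (intro tendsto_Pair tendsto_matrix_mult tendsto_fst tendsto_snd tendsto_const)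

lemma fibre_mult_in_Times:
  assumes "closed_matrix_group G" "closed_pair_group U" "h \<in> G \<times> U" "k \<in> stabilizer G U a"
  shows "fibre_mult h k \<in> G \<times> U"
  using assms
  by (cases h, cases k) (auto simp: stabilizer_def closed_matrix_group_mult closed_pair_group_mult)

lemma orbit_param_fibre_mult:
  assumes "k \<in> stabilizer G U a"
  shows "orbit_param a (fibre_mult h k) = orbit_param a h"
proof -
  obtain g v1 v2 k0 k1 k2 where hk: "h = (g, v1, v2)" "k = (k0, k1, k2)"
    by (cases h, cases k) auto
  have "g ** k0 ** a ** (k1 ** v1) = g ** (k0 ** a ** k1) ** v1"
    and "g ** k0 ** (k2 ** v2) = g ** (k0 ** k2) ** v2"
    by (simp_all add: matrix_mul_assoc)
  with assms show ?thesis by (simp add: hk stabilizer_def)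
qed

lemma mexp_triple_in_stabilizer:
  assumes G: "closed_matrix_group G" and a: "a \<in> G"
    and W: "W \<in> lie_alg G \<times> lie_alg_pair U" and W_ker: "orbit_param_diff a W = 0"
  shows "mexp_triple (s *\<^sub>R W) \<in> stabilizer G U a"
proof -
  obtain W0 W1 W2 where W_eq: "W = (W0, W1, W2)" by (cases W) auto
  have a_inv: "a ** matrix_inv a = mat 1" "matrix_inv a ** a = mat 1"
    using closed_matrix_group_invertible[OF G a] by (simp_all add: matrix_inv_right matrix_inv_left)
  have aW1: "a ** W1 = - (W0 ** a)" and W2: "W2 = - W0"
    using W_ker by (simp_all add: W_eq zero_prod_def eq_neg_iff_add_eq_0 add.commute)
  have "W1 = matrix_inv a ** (a ** W1)" by (simp add: matrix_mul_assoc a_inv)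
  then have "s *\<^sub>R W1 = matrix_inv a ** (- (s *\<^sub>R W0)) ** a"
    by (simp add: aW1 matrix_neg_left matrix_neg_right matrix_scaleR_left matrix_scaleR_right
        matrix_mul_assoc)
  then have W1_exp: "mexp (s *\<^sub>R W1) = matrix_inv a ** mexp (- (s *\<^sub>R W0)) ** a"
    by (simp add: mexp_conjugate a_inv)
  have "mexp (s *\<^sub>R W0) ** a ** mexp (s *\<^sub>R W1)
      = mexp (s *\<^sub>R W0) ** ((a ** matrix_inv a) ** (mexp (- (s *\<^sub>R W0)) ** a))"
    unfolding W1_exp by (simp add: matrix_mul_assoc)
  moreover have "mexp (s *\<^sub>R W0) ** mexp (s *\<^sub>R W2) = mexp (s *\<^sub>R W0) ** mexp (- (s *\<^sub>R W0))"
    by (simp add: W2)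
  moreover have "mexp (s *\<^sub>R W0) \<in> G" "(mexp (s *\<^sub>R W1), mexp (s *\<^sub>R W2)) \<in> U"
    using W by (simp_all add: W_eq lie_alg_def lie_alg_pair_def)
  ultimately show ?thesis
    by (simp add: stabilizer_def W_eq a_inv matrix_mul_assoc mexp_mult_mexp_uminus)
qed

lemma tendsto_Pair_iff: "((\<lambda>x. (f x, g x)) \<longlongrightarrow> (a, b)) F \<longleftrightarrow> (f \<longlongrightarrow> a) F \<and> (g \<longlongrightarrow> b) F"
proof
  assume "((\<lambda>x. (f x, g x)) \<longlongrightarrow> (a, b)) F"
  from tendsto_fst[OF this] tendsto_snd[OF this] show "(f \<longlongrightarrow> a) F \<and> (g \<longlongrightarrow> b) F" by simp
qed (elim conjE, rule tendsto_Pair)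

lemma tendsto_difference_quotient_triple_iff:
  "(\<lambda>n. (1 / c n) *\<^sub>R (h n - one_triple)) \<longlonglongrightarrow> (Z0, Z1, Z2) \<longleftrightarrow>
     (\<lambda>n. (1 / c n) *\<^sub>R (fst (h n) - mat 1)) \<longlonglongrightarrow> Z0 \<and>
     (\<lambda>n. (1 / c n) *\<^sub>R (fst (snd (h n)) - mat 1)) \<longlonglongrightarrow> Z1 \<and>
     (\<lambda>n. (1 / c n) *\<^sub>R (snd (snd (h n)) - mat 1)) \<longlonglongrightarrow> Z2"
proof -
  have "(\<lambda>n. (1 / c n) *\<^sub>R (h n - one_triple)) = (\<lambda>n. ((1 / c n) *\<^sub>R (fst (h n) - mat 1),
      (1 / c n) *\<^sub>R (fst (snd (h n)) - mat 1), (1 / c n) *\<^sub>R (snd (snd (h n)) - mat 1)))"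
    by (rule ext) (simp add: prod_eq_iff)
  then show ?thesis by (simp add: tendsto_Pair_iff)
qed

lemma tendsto_one_triple_iff:
  "h \<longlonglongrightarrow> one_triple \<longleftrightarrow>
     (\<lambda>n. fst (h n)) \<longlonglongrightarrow> mat 1 \<and> (\<lambda>n. fst (snd (h n))) \<longlonglongrightarrow> mat 1 \<and>
     (\<lambda>n. snd (snd (h n))) \<longlonglongrightarrow> mat 1"
  using tendsto_Pair_iff[of "\<lambda>n. fst (h n)" "\<lambda>n. snd (h n)"]
    tendsto_Pair_iff[of "\<lambda>n. fst (snd (h n))" "\<lambda>n. snd (snd (h n))"]
  by simp

lemma tendsto_difference_quotient_mult:
  fixes A B :: "nat \<Rightarrow> real^'n^'n"
  assumes A: "(\<lambda>n. (1 / c n) *\<^sub>R (A n - mat 1)) \<longlonglongrightarrow> X"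
    and B: "(\<lambda>n. (1 / c n) *\<^sub>R (B n - mat 1)) \<longlonglongrightarrow> Y" "B \<longlonglongrightarrow> mat 1"
  shows "(\<lambda>n. (1 / c n) *\<^sub>R (A n ** P ** B n - P)) \<longlonglongrightarrow> X ** P + P ** Y"
proof -
  have "A n ** P ** B n - P = (A n - mat 1) ** P ** B n + P ** (B n - mat 1)" for n
    by (simp add: matrix_diff_rdistrib matrix_diff_ldistrib)
  then have "(1 / c n) *\<^sub>R (A n ** P ** B n - P)
      = ((1 / c n) *\<^sub>R (A n - mat 1)) ** P ** B n + P ** ((1 / c n) *\<^sub>R (B n - mat 1))" for n
    by (simp only: scaleR_add_right matrix_scaleR_left matrix_scaleR_right)
  moreover have "(\<lambda>n. ((1 / c n) *\<^sub>R (A n - mat 1)) ** P ** B n + P ** ((1 / c n) *\<^sub>R (B n - mat 1)))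
      \<longlonglongrightarrow> X ** P ** mat 1 + P ** Y"
    by (intro tendsto_add tendsto_matrix_mult A B tendsto_const)
  ultimately show ?thesis by simp
qed

lemma tendsto_difference_quotient_orbit_param:
  assumes h: "h \<longlonglongrightarrow> one_triple" and Z: "(\<lambda>n. (1 / c n) *\<^sub>R (h n - one_triple)) \<longlonglongrightarrow> Z"
  shows "(\<lambda>n. (1 / c n) *\<^sub>R (orbit_param a (h n) - (a, mat 1))) \<longlonglongrightarrow> orbit_param_diff a Z"
proof -
  obtain Z0 Z1 Z2 where Z_eq: "Z = (Z0, Z1, Z2)" by (cases Z) auto
  note h' = h[unfolded tendsto_one_triple_iff] and Z' = Z[unfolded Z_eq tendsto_difference_quotient_triple_iff]
  have "(\<lambda>n. (1 / c n) *\<^sub>R (fst (h n) ** a ** fst (snd (h n)) - a)) \<longlonglongrightarrow> Z0 ** a + a ** Z1"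
    by (rule tendsto_difference_quotient_mult) (use h' Z' in auto)
  moreover have "(\<lambda>n. (1 / c n) *\<^sub>R (fst (h n) ** mat 1 ** snd (snd (h n)) - mat 1))
      \<longlonglongrightarrow> Z0 ** mat 1 + mat 1 ** Z2"
    by (rule tendsto_difference_quotient_mult) (use h' Z' in auto)
  ultimately have "(\<lambda>n. (1 / c n) *\<^sub>R (orbit_param a (h n) - (a, mat 1)))
      \<longlonglongrightarrow> (Z0 ** a + a ** Z1, Z0 + Z2)"
    by (simp add: orbit_param_def case_prod_beta tendsto_Pair_iff)
  then show ?thesis by (simp add: Z_eq)
qed

lemma tendsto_difference_quotient_fibre_mult:
  assumes h: "h \<longlonglongrightarrow> one_triple" "(\<lambda>n. (1 / c n) *\<^sub>R (h n - one_triple)) \<longlonglongrightarrow> Z"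
    and k: "k \<longlonglongrightarrow> one_triple" "(\<lambda>n. (1 / c n) *\<^sub>R (k n - one_triple)) \<longlonglongrightarrow> W"
  shows "(\<lambda>n. (1 / c n) *\<^sub>R (fibre_mult (h n) (k n) - one_triple)) \<longlonglongrightarrow> Z + W"
proof -
  obtain Z0 Z1 Z2 W0 W1 W2 where ZW: "Z = (Z0, Z1, Z2)" "W = (W0, W1, W2)"
    by (cases Z, cases W) auto
  note h' = h(1)[unfolded tendsto_one_triple_iff] h(2)[unfolded ZW tendsto_difference_quotient_triple_iff]
  note k' = k(1)[unfolded tendsto_one_triple_iff] k(2)[unfolded ZW tendsto_difference_quotient_triple_iff]
  have "(\<lambda>n. (1 / c n) *\<^sub>R (fst (h n) ** mat 1 ** fst (k n) - mat 1)) \<longlonglongrightarrow> Z0 ** mat 1 + mat 1 ** W0"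
    by (rule tendsto_difference_quotient_mult) (use h' k' in auto)
  moreover have "(\<lambda>n. (1 / c n) *\<^sub>R (fst (snd (k n)) ** mat 1 ** fst (snd (h n)) - mat 1))
      \<longlonglongrightarrow> W1 ** mat 1 + mat 1 ** Z1"
    by (rule tendsto_difference_quotient_mult) (use h' k' in auto)
  moreover have "(\<lambda>n. (1 / c n) *\<^sub>R (snd (snd (k n)) ** mat 1 ** snd (snd (h n)) - mat 1))
      \<longlonglongrightarrow> W2 ** mat 1 + mat 1 ** Z2"
    by (rule tendsto_difference_quotient_mult) (use h' k' in auto)
  ultimately show ?thesis
    by (simp add: ZW fibre_mult_def case_prod_beta tendsto_Pair_iff add.commute)
qed

lemma difference_quotient_limit_in_lie_alg_triple:
  assumes G: "closed_matrix_group G" and U: "closed_pair_group U" and h: "\<And>n. h n \<in> G \<times> U"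
    and c: "c \<longlonglongrightarrow> 0" "\<And>n. c n > 0"
    and Z: "(\<lambda>n. (1 / c n) *\<^sub>R (h n - one_triple)) \<longlonglongrightarrow> Z"
  shows "Z \<in> lie_alg G \<times> lie_alg_pair U"
proof -
  obtain Z0 Z1 Z2 where Z_eq: "Z = (Z0, Z1, Z2)" by (cases Z) auto
  note Z' = Z[unfolded Z_eq tendsto_difference_quotient_triple_iff]
  have "Z0 \<in> lie_alg G"
    using h Z' by (intro difference_quotient_limit_in_lie_alg[OF G _ c, where h="\<lambda>n. fst (h n)"])
      (auto simp: mem_Times_iff)
  moreover have "(Z1, Z2) \<in> lie_alg_pair U"
    using h Z' by (intro difference_quotient_limit_in_lie_alg_pair[OF U _ c, where h="\<lambda>n. snd (h n)"])
      (auto simp: mem_Times_iff)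
  ultimately show ?thesis by (simp add: Z_eq)
qed

lemma tendsto_difference_quotient_mexp_triple:
  assumes c: "c \<longlonglongrightarrow> 0" "\<And>n. c n \<noteq> 0"
  shows "(\<lambda>n. (1 / c n) *\<^sub>R (mexp_triple (c n *\<^sub>R W) - one_triple)) \<longlonglongrightarrow> W"
    and "(\<lambda>n. mexp_triple (c n *\<^sub>R W)) \<longlonglongrightarrow> one_triple"
proof -
  obtain W0 W1 W2 where W_eq: "W = (W0, W1, W2)" by (cases W) auto
  have "((\<lambda>s. mexp_triple (s *\<^sub>R W)) has_vector_derivative W) (at 0)"
    by (simp add: W_eq has_vector_derivative_Pair has_vector_derivative_mexp_scaleR)
  from difference_quotient_LIMSEQ[OF this c]
  show "(\<lambda>n. (1 / c n) *\<^sub>R (mexp_triple (c n *\<^sub>R W) - one_triple)) \<longlonglongrightarrow> W"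
    by (simp add: W_eq)
  have "(\<lambda>n. c n *\<^sub>R Wi) \<longlonglongrightarrow> 0 *\<^sub>R Wi" for Wi :: "'a mat"
    by (intro tendsto_scaleR c tendsto_const)
  then have "(\<lambda>n. mexp (c n *\<^sub>R Wi)) \<longlonglongrightarrow> mat 1" for Wi :: "'a mat"
    using tendsto_mexp by fastforce
  then show "(\<lambda>n. mexp_triple (c n *\<^sub>R W)) \<longlonglongrightarrow> one_triple"
    by (simp add: W_eq tendsto_Pair_iff)
qed

definition minimal_lift ::
    "'n::finite mat set \<Rightarrow> ('n mat \<times> 'n mat) set \<Rightarrow> 'n mat \<Rightarrow> 'n mat \<times> 'n mat \<times> 'n mat \<Rightarrow> bool" where
  "minimal_lift G U a h \<longleftrightarrow> h \<in> G \<times> U \<and>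
     (\<forall>k\<in>stabilizer G U a. norm (h - one_triple) \<le> norm (fibre_mult h k - one_triple))"

lemma continuous_on_orbit_param: "continuous_on S (orbit_param a)"
  unfolding orbit_param_def case_prod_beta
  by (intro continuous_on_Pair bounded_bilinear.continuous_on[OF bounded_bilinear_matrix_mult]
      continuous_on_fst continuous_on_snd continuous_on_id continuous_on_const)

lemma exists_minimal_lift:
  assumes G: "closed_matrix_group G" "compact G" and U: "closed_pair_group U" "compact U"
    and y: "y \<in> orbit_param a ` (G \<times> U)"
  obtains h where "minimal_lift G U a h" "orbit_param a h = y"
proof -
  let ?F = "(G \<times> U) \<inter> {h. orbit_param a h = y}"
  have "closed {h. orbit_param a h = y}"
    by (rule closed_Collect_eq[OF continuous_on_orbit_param continuous_on_const])
  then have "compact ?F"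
    by (rule compact_Int_closed[OF compact_Times[OF G(2) U(2)]])
  moreover have "?F \<noteq> {}" using y by auto
  moreover have "continuous_on ?F (\<lambda>h. norm (h - one_triple))"
    by (intro continuous_on_norm continuous_on_diff continuous_on_id continuous_on_const)
  ultimately obtain h where h: "h \<in> ?F" "\<forall>h'\<in>?F. norm (h - one_triple) \<le> norm (h' - one_triple)"
    using continuous_attains_inf[of ?F] by blast
  have "fibre_mult h k \<in> ?F" if "k \<in> stabilizer G U a" for k
    using h(1) that by (simp add: fibre_mult_in_Times[OF G(1) U(1)] orbit_param_fibre_mult)
  with h have "minimal_lift G U a h" unfolding minimal_lift_def by blast
  with h(1) show ?thesis using that by blast
qed

lemma stabilizer_inverse:
  assumes G: "closed_matrix_group G" and U: "closed_pair_group U" and l: "l \<in> stabilizer G U a"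
  obtains k where "k \<in> stabilizer G U a" "fibre_mult l k = one_triple"
proof -
  obtain g v1 v2 where l_eq: "l = (g, v1, v2)" by (cases l) auto
  have g: "g \<in> G" and v: "(v1, v2) \<in> U" and gav: "g ** a ** v1 = a" and gv: "g ** v2 = mat 1"
    using l by (auto simp: stabilizer_def l_eq)
  have inv: "invertible g" "invertible v1" "invertible v2"
    using closed_matrix_group_invertible[OF G g] closed_pair_group_invertible[OF U v] by auto
  have v2_inv: "matrix_inv v2 = g"
    using gv matrix_left_right_inverse by (blast intro: matrix_inv_unique)
  have "matrix_inv g ** a ** matrix_inv v1 = matrix_inv g ** (g ** a ** v1) ** matrix_inv v1"
    by (simp add: gav)
  also have "\<dots> = (matrix_inv g ** g) ** a ** (v1 ** matrix_inv v1)"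
    by (simp add: matrix_mul_assoc)
  also have "\<dots> = a"
    by (simp add: matrix_inv_left[OF inv(1)] matrix_inv_right[OF inv(2)])
  finally have "matrix_inv g ** a ** matrix_inv v1 = a" .
  then show ?thesis
  proof (intro that[of "(matrix_inv g, matrix_inv v1, matrix_inv v2)"])
    show "(matrix_inv g, matrix_inv v1, matrix_inv v2) \<in> stabilizer G U a"
      using \<open>matrix_inv g ** a ** matrix_inv v1 = a\<close> closed_matrix_group_inv[OF G g]
        closed_pair_group_inv[OF U v]
      by (simp add: stabilizer_def v2_inv matrix_inv_left[OF inv(1)])
    show "fibre_mult l (matrix_inv g, matrix_inv v1, matrix_inv v2) = one_triple"
      using gv by (simp add: l_eq v2_inv matrix_inv_right[OF inv(1)] matrix_inv_left[OF inv(2)])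
  qed
qed

lemma minimal_lifts_tendsto_one:
  assumes G: "closed_matrix_group G" "compact G" and U: "closed_pair_group U" "compact U"
    and h: "\<And>n. minimal_lift G U a (h n)"
    and y: "(\<lambda>n. orbit_param a (h n)) \<longlonglongrightarrow> (a, mat 1)"
  shows "h \<longlonglongrightarrow> one_triple"
proof (rule ccontr)
  assume "\<not> h \<longlonglongrightarrow> one_triple"
  then obtain \<epsilon> where "\<epsilon> > 0" and not_ev: "\<not> eventually (\<lambda>n. dist (h n) one_triple < \<epsilon>) sequentially"
    unfolding tendsto_iff by blast
  from not_ev have "infinite {n. \<not> dist (h n) one_triple < \<epsilon>}"
    unfolding cofinite_eq_sequentially[symmetric] eventually_cofinite .
  from infinite_enumerate[OF this] obtain r :: "nat \<Rightarrow> nat"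
    where r: "strict_mono r" "\<forall>n. r n \<in> {n. \<not> dist (h n) one_triple < \<epsilon>}"
    by blast
  have far: "\<epsilon> \<le> norm (h (r n) - one_triple)" for n
    using r(2) by (simp add: dist_norm not_less)
  have "\<forall>n. h (r n) \<in> G \<times> U" using h by (simp add: minimal_lift_def)
  then obtain l q where l': "l \<in> G \<times> U" "strict_mono q" "((\<lambda>n. h (r n)) \<circ> q) \<longlonglongrightarrow> l"
    by (rule seq_compactE[OF compact_imp_seq_compact[OF compact_Times[OF G(2) U(2)]]])
  then have l: "l \<in> G \<times> U" "strict_mono q" "(\<lambda>n. h (r (q n))) \<longlonglongrightarrow> l"
    by (simp_all add: o_def)
  have "(\<lambda>n. orbit_param a (h (r (q n)))) \<longlonglongrightarrow> (a, mat 1)"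
    using LIMSEQ_subseq_LIMSEQ[OF y strict_mono_o[OF r(1) l(2)]] by (simp add: o_def)
  then have "orbit_param a l = (a, mat 1)"
    using tendsto_orbit_param[OF l(3)] LIMSEQ_unique by blast
  with l(1) have "l \<in> stabilizer G U a" by (simp add: stabilizer_def)
  then obtain k where k: "k \<in> stabilizer G U a" "fibre_mult l k = one_triple"
    by (rule stabilizer_inverse[OF G(1) U(1)])
  have "(\<lambda>n. fibre_mult (h (r (q n))) k) \<longlonglongrightarrow> one_triple"
    using tendsto_fibre_mult[OF l(3), of k] k(2) by simp
  then have "(\<lambda>n. norm (fibre_mult (h (r (q n))) k - one_triple)) \<longlonglongrightarrow> 0"
    by (intro tendsto_norm_zero LIM_zero)
  moreover have "\<epsilon> \<le> norm (fibre_mult (h (r (q n))) k - one_triple)" for n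
    using far[of "q n"] h[of "r (q n)"] k(1) by (auto simp: minimal_lift_def)
  ultimately have "\<epsilon> \<le> 0"
    using tendsto_lowerbound[OF _ always_eventually trivial_limit_sequentially] by blast
  with \<open>\<epsilon> > 0\<close> show False by simp
qed

lemma lie_alg_triple_scaleR:
  "Z \<in> lie_alg G \<times> lie_alg_pair U \<Longrightarrow> c *\<^sub>R Z \<in> lie_alg G \<times> lie_alg_pair U"
  by (cases Z) (simp add: lie_alg_def lie_alg_pair_def)

text \<open>A minimal lift cannot move along the stabilizer to first order: moving back along the
  limit direction by half a step would shorten it.\<close>

lemma minimal_lifts_stabilizer_direction_eq_0:
  assumes G: "closed_matrix_group G" and a: "a \<in> G"
    and h: "\<And>n. minimal_lift G U a (h n)" "h \<longlonglongrightarrow> one_triple"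
    and c: "c \<longlonglongrightarrow> 0" "\<And>n. c n > 0"
    and Z: "(\<lambda>n. (1 / c n) *\<^sub>R (h n - one_triple)) \<longlonglongrightarrow> Z"
    and Z_lie: "Z \<in> lie_alg G \<times> lie_alg_pair U" and Z_ker: "orbit_param_diff a Z = 0"
  shows "Z = 0"
proof -
  define W where "W = (- 1 / 2) *\<^sub>R Z"
  define k where "k n = mexp_triple (c n *\<^sub>R W)" for n
  have c_ne: "c n \<noteq> 0" for n using c(2)[of n] by simp
  have W_lie: "W \<in> lie_alg G \<times> lie_alg_pair U"
    unfolding W_def by (rule lie_alg_triple_scaleR[OF Z_lie])
  have W_ker: "orbit_param_diff a W = 0"
    unfolding W_def orbit_param_diff_scaleR Z_ker by simp
  have "k n \<in> stabilizer G U a" for n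
    unfolding k_def by (rule mexp_triple_in_stabilizer[OF G a W_lie W_ker])
  then have "norm ((1 / c n) *\<^sub>R (h n - one_triple))
      \<le> norm ((1 / c n) *\<^sub>R (fibre_mult (h n) (k n) - one_triple))" for n
    using h(1)[of n] c(2)[of n] by (simp add: minimal_lift_def divide_right_mono)
  moreover have "(\<lambda>n. (1 / c n) *\<^sub>R (fibre_mult (h n) (k n) - one_triple)) \<longlonglongrightarrow> Z + W"
    unfolding k_def
    by (intro tendsto_difference_quotient_fibre_mult h(2) Z tendsto_difference_quotient_mexp_triple c(1) c_ne)
  ultimately have "norm Z \<le> norm (Z + W)"
    by (intro LIMSEQ_le[OF tendsto_norm[OF Z] tendsto_norm]) auto
  also have "Z + W = (1 + - 1 / 2) *\<^sub>R Z"
    unfolding W_def by (simp only: scaleR_left_distrib scaleR_one)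
  also have "norm \<dots> = norm Z / 2"
    by simp
  finally show ?thesis by simp
qed

lemma normalized_convergent_subseq:
  fixes x :: "nat \<Rightarrow> 'a::{real_normed_vector,heine_borel}"
  assumes s: "\<And>n. s n > 0"
  obtains r Z \<sigma> where "strict_mono r"
    "(\<lambda>n. (1 / (norm (x (r n)) + s (r n))) *\<^sub>R x (r n)) \<longlonglongrightarrow> Z"
    "(\<lambda>n. s (r n) / (norm (x (r n)) + s (r n))) \<longlonglongrightarrow> \<sigma>" "norm Z + \<sigma> = 1"
proof -
  let ?\<mu> = "\<lambda>n. norm (x n) + s n"
  let ?p = "\<lambda>n. ((1 / ?\<mu> n) *\<^sub>R x n, s n / ?\<mu> n)"
  have \<mu>_pos: "?\<mu> n > 0" for n using s[of n] by (simp add: add_nonneg_pos)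
  have sum_one: "norm ((1 / ?\<mu> n) *\<^sub>R x n) + s n / ?\<mu> n = 1" for n
    using \<mu>_pos[of n] s[of n] by (simp add: add_divide_distrib[symmetric])
  have "norm (?p n) \<le> 1" for n
  proof -
    have "norm (?p n) \<le> norm ((1 / ?\<mu> n) *\<^sub>R x n) + norm (s n / ?\<mu> n)"
      by (rule norm_Pair_le)
    also have "norm (s n / ?\<mu> n) = s n / ?\<mu> n" using s[of n] \<mu>_pos[of n] by simp
    finally show ?thesis using sum_one[of n] by linarith
  qed
  then have "\<forall>n. ?p n \<in> cball 0 1" by simp
  then obtain l r where r: "strict_mono r" "(?p \<circ> r) \<longlonglongrightarrow> l"
    by (rule seq_compactE[OF compact_imp_seq_compact[OF compact_cball]])
  obtain Z \<sigma> where l: "l = (Z, \<sigma>)" by (cases l)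
  have Z: "(\<lambda>n. (1 / ?\<mu> (r n)) *\<^sub>R x (r n)) \<longlonglongrightarrow> Z"
    and \<sigma>: "(\<lambda>n. s (r n) / ?\<mu> (r n)) \<longlonglongrightarrow> \<sigma>"
    using r(2) by (simp_all add: l o_def tendsto_Pair_iff)
  have "(\<lambda>n. norm ((1 / ?\<mu> (r n)) *\<^sub>R x (r n)) + s (r n) / ?\<mu> (r n)) \<longlonglongrightarrow> norm Z + \<sigma>"
    by (intro tendsto_add tendsto_norm Z \<sigma>)
  then have "(\<lambda>n. 1) \<longlonglongrightarrow> norm Z + \<sigma>"
    unfolding sum_one .
  then have "norm Z + \<sigma> = 1" by (simp add: LIMSEQ_const_iff)
  with r(1) Z \<sigma> show ?thesis by (rule that)
qed

lemma tendsto_rescale: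
  fixes x :: "nat \<Rightarrow> 'a::real_normed_vector"
  assumes "(\<lambda>n. (1 / s n) *\<^sub>R x n) \<longlonglongrightarrow> w" "(\<lambda>n. s n / \<mu> n) \<longlonglongrightarrow> \<sigma>" "\<And>n. s n \<noteq> 0"
  shows "(\<lambda>n. (1 / \<mu> n) *\<^sub>R x n) \<longlonglongrightarrow> \<sigma> *\<^sub>R w"
proof -
  have "(s n / \<mu> n) *\<^sub>R ((1 / s n) *\<^sub>R x n) = (1 / \<mu> n) *\<^sub>R x n" for n
    using assms(3)[of n] by simp
  with tendsto_scaleR[OF assms(2,1)] show ?thesis
    by (simp only:)
qed

text \<open>Blow up the minimal lifts at the scale \<open>\<mu>\<^sub>n = |h\<^sub>n - 1| + s\<^sub>n\<close>: the limit
  direction \<open>(Z, \<sigma>)\<close> satisfies \<open>orbit_param_diff a Z = \<sigma> w\<close>, and \<open>\<sigma> = 0\<close> is excluded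
  because then \<open>Z\<close> would be a nonzero stabilizer direction.\<close>

lemma minimal_lifts_velocity_in_image:
  assumes G: "closed_matrix_group G" and U: "closed_pair_group U" and a: "a \<in> G"
    and h: "\<And>n. minimal_lift G U a (h n)" "h \<longlonglongrightarrow> one_triple"
    and s: "s \<longlonglongrightarrow> 0" "\<And>n. s n > 0"
    and w: "(\<lambda>n. (1 / s n) *\<^sub>R (orbit_param a (h n) - (a, mat 1))) \<longlonglongrightarrow> w"
  shows "w \<in> orbit_param_diff a ` (lie_alg G \<times> lie_alg_pair U)"
proof -
  let ?\<mu> = "\<lambda>n. norm (h n - one_triple) + s n"
  obtain r Z \<sigma> where r: "strict_mono r"
    and Z: "(\<lambda>n. (1 / ?\<mu> (r n)) *\<^sub>R (h (r n) - one_triple)) \<longlonglongrightarrow> Z"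
    and \<sigma>: "(\<lambda>n. s (r n) / ?\<mu> (r n)) \<longlonglongrightarrow> \<sigma>" "norm Z + \<sigma> = 1"
    using normalized_convergent_subseq[of s "\<lambda>n. h n - one_triple"] s(2) by blast
  have "?\<mu> \<longlonglongrightarrow> 0 + 0"
    using h(2) s(1) by (intro tendsto_add tendsto_norm_zero LIM_zero)
  then have \<mu>: "(\<lambda>n. ?\<mu> (r n)) \<longlonglongrightarrow> 0" "\<And>n. ?\<mu> (r n) > 0"
    using LIMSEQ_subseq_LIMSEQ[OF _ r, of ?\<mu>] s(2) by (simp_all add: o_def add_nonneg_pos)
  have hr: "(\<lambda>n. h (r n)) \<longlonglongrightarrow> one_triple" "\<And>n. minimal_lift G U a (h (r n))"
    using LIMSEQ_subseq_LIMSEQ[OF h(2) r] h(1) by (simp_all add: o_def)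
  have Z_lie: "Z \<in> lie_alg G \<times> lie_alg_pair U"
    using hr(2) by (intro difference_quotient_limit_in_lie_alg_triple[OF G U _ \<mu> Z])
      (simp add: minimal_lift_def)
  have "(\<lambda>n. (1 / ?\<mu> (r n)) *\<^sub>R (orbit_param a (h (r n)) - (a, mat 1))) \<longlonglongrightarrow> orbit_param_diff a Z"
    by (rule tendsto_difference_quotient_orbit_param[OF hr(1) Z])
  moreover have "(\<lambda>n. (1 / ?\<mu> (r n)) *\<^sub>R (orbit_param a (h (r n)) - (a, mat 1))) \<longlonglongrightarrow> \<sigma> *\<^sub>R w"
    using LIMSEQ_subseq_LIMSEQ[OF w r] \<sigma>(1) s(2)
    by (intro tendsto_rescale[where s="\<lambda>n. s (r n)"]) (auto simp: o_def less_imp_neq[symmetric])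
  ultimately have "orbit_param_diff a Z = \<sigma> *\<^sub>R w"
    by (rule LIMSEQ_unique)
  moreover have "\<sigma> \<noteq> 0"
  proof
    assume "\<sigma> = 0"
    with \<open>orbit_param_diff a Z = \<sigma> *\<^sub>R w\<close> have "Z = 0"
      by (intro minimal_lifts_stabilizer_direction_eq_0[OF G a hr(2,1) \<mu> Z Z_lie]) simp
    with \<sigma>(2) \<open>\<sigma> = 0\<close> show False by simp
  qed
  ultimately have "w = orbit_param_diff a ((1 / \<sigma>) *\<^sub>R Z)"
    by (simp add: orbit_param_diff_scaleR)
  with lie_alg_triple_scaleR[OF Z_lie] show ?thesis by blast
qed

lemma has_vector_derivative_orbit_param_mexp_triple:
  "((\<lambda>s. orbit_param a (mexp_triple (s *\<^sub>R Z))) has_vector_derivative orbit_param_diff a Z) (at 0)"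
proof -
  obtain X V1 V2 where Z_eq: "Z = (X, V1, V2)" by (cases Z) auto
  note d = has_vector_derivative_mexp_scaleR[where T=UNIV]
  have "((\<lambda>s. mexp (s *\<^sub>R X) ** a) has_vector_derivative (mexp (0 *\<^sub>R X) ** 0 + X ** a)) (at 0)"
    by (intro matrix_mult_has_vector_derivative d has_vector_derivative_const)
  then have "((\<lambda>s. mexp (s *\<^sub>R X) ** a ** mexp (s *\<^sub>R V1)) has_vector_derivative
      (mexp (0 *\<^sub>R X) ** a ** V1 + X ** a ** mexp (0 *\<^sub>R V1))) (at 0)"
    by (intro matrix_mult_has_vector_derivative d) simp
  moreover have "((\<lambda>s. mexp (s *\<^sub>R X) ** mexp (s *\<^sub>R V2)) has_vector_derivative
      (mexp (0 *\<^sub>R X) ** V2 + X ** mexp (0 *\<^sub>R V2))) (at 0)"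
    by (intro matrix_mult_has_vector_derivative d)
  ultimately show ?thesis
    by (simp add: Z_eq has_vector_derivative_Pair add.commute)
qed

theorem tangent_space_orbit:
  assumes G: "closed_matrix_group G" "compact G" and U: "closed_pair_group U" "compact U"
    and a: "a \<in> G"
  shows "tangent_space (orbit G U (a, mat 1)) (a, mat 1) = orbit_param_diff a ` (lie_alg G \<times> lie_alg_pair U)"
proof (intro set_eqI iffI)
  fix w assume "w \<in> tangent_space (orbit G U (a, mat 1)) (a, mat 1)"
  then obtain \<gamma> where \<gamma>: "\<gamma> 0 = (a, mat 1)" "\<And>t. \<gamma> t \<in> orbit_param a ` (G \<times> U)"
    "(\<gamma> has_vector_derivative w) (at 0)"
    unfolding tangent_space_def orbit_eq_image_orbit_param[OF U(1)] by blast
  define s where "s = (\<lambda>n. inverse (real (Suc n)))"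
  have s: "s \<longlonglongrightarrow> 0" "\<And>n. s n > 0" "\<And>n. s n \<noteq> 0"
    using LIMSEQ_inverse_real_of_nat by (simp_all add: s_def)
  have "\<forall>n. \<exists>h. minimal_lift G U a h \<and> orbit_param a h = \<gamma> (s n)"
    using exists_minimal_lift[OF G U \<gamma>(2)] by blast
  from choice[OF this] obtain h
    where h: "\<And>n. minimal_lift G U a (h n)" "\<And>n. orbit_param a (h n) = \<gamma> (s n)"
    by blast
  have "(\<lambda>n. \<gamma> (s n)) \<longlonglongrightarrow> \<gamma> 0"
    by (rule isCont_tendsto_compose[OF has_vector_derivative_continuous[OF \<gamma>(3)] s(1)])
  then have "h \<longlonglongrightarrow> one_triple"
    using \<gamma>(1) h by (intro minimal_lifts_tendsto_one[OF G U]) auto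
  moreover have "(\<lambda>n. (1 / s n) *\<^sub>R (orbit_param a (h n) - (a, mat 1))) \<longlonglongrightarrow> w"
    using difference_quotient_LIMSEQ[OF \<gamma>(3) s(1,3)] by (simp add: h(2) \<gamma>(1))
  ultimately show "w \<in> orbit_param_diff a ` (lie_alg G \<times> lie_alg_pair U)"
    by (rule minimal_lifts_velocity_in_image[OF G(1) U(1) a h(1) _ s(1,2)])
next
  fix w assume "w \<in> orbit_param_diff a ` (lie_alg G \<times> lie_alg_pair U)"
  then obtain Z where Z: "Z \<in> lie_alg G \<times> lie_alg_pair U" "w = orbit_param_diff a Z"
    by blast
  let ?\<gamma> = "\<lambda>t. orbit_param a (mexp_triple (t *\<^sub>R Z))"
  have "mexp_triple (t *\<^sub>R Z) \<in> G \<times> U" for t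
    using Z(1) by (cases Z) (simp add: lie_alg_def lie_alg_pair_def)
  then have "?\<gamma> t \<in> orbit_param a ` (G \<times> U)" for t by blast
  moreover have "?\<gamma> 0 = (a, mat 1)" by (cases Z) simp
  ultimately show "w \<in> tangent_space (orbit G U (a, mat 1)) (a, mat 1)"
    unfolding tangent_space_def orbit_eq_image_orbit_param[OF U(1)] Z(2)
    using has_vector_derivative_orbit_param_mexp_triple[of a Z]
    by (intro CollectI exI[of _ ?\<gamma>] conjI allI)
qed

section \<open>Horizontal spaces\<close>

lemma Ad_uminus: "Ad g (- X) = - Ad g X"
  by (simp add: Ad_def matrix_neg_left matrix_neg_right)

lemma matrix_inv_mult_orbit_tangent:
  assumes "invertible a"
  shows "matrix_inv a ** (X ** a + a ** V) = Ad (matrix_inv a) X + V"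
  using assms
  by (simp add: Ad_def matrix_add_ldistrib matrix_mul_assoc matrix_inv_matrix_inv matrix_inv_left)

lemma bi_invariant_Ad_matrix_inv:
  assumes G: "closed_matrix_group G" and g: "g \<in> G"
    and biinv: "\<forall>g\<in>G. \<forall>X\<in>lie_alg G. \<forall>Y\<in>lie_alg G. B (Ad g X) (Ad g Y) = B X Y"
    and X: "X \<in> lie_alg G" and Y: "Y \<in> lie_alg G"
  shows "B X (Ad (matrix_inv g) Y) = B (Ad g X) Y"
    and "B (Ad (matrix_inv g) X) Y = B X (Ad g Y)"
  using biinv g X Y Ad_in_lie_alg[OF G closed_matrix_group_inv[OF G g]]
    Ad_Ad_matrix_inv[OF closed_matrix_group_invertible[OF G g]]
  by metis+

lemma orbit_tangent_pairing:
  fixes B :: "'n::finite mat \<Rightarrow> 'n mat \<Rightarrow> real"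
  assumes G: "closed_matrix_group G" and a: "a \<in> G" and B: "bilinear B"
    and biinv: "\<forall>g\<in>G. \<forall>X\<in>lie_alg G. \<forall>Y\<in>lie_alg G. B (Ad g X) (Ad g Y) = B X Y"
    and P: "P \<in> lie_alg G" and X: "X \<in> lie_alg G"
  shows "B P (matrix_inv a ** (X ** a + a ** V1)) + B Q (X + V2) = B (Ad a P + Q) X + (B P V1 + B Q V2)"
  using P X closed_matrix_group_invertible[OF G a]
  by (simp add: matrix_inv_mult_orbit_tangent bilinear_ladd[OF B] bilinear_radd[OF B]
      bi_invariant_Ad_matrix_inv[OF G a biinv])

lemma orthogonal_to_orbit_iff:
  fixes B :: "'n::finite mat \<Rightarrow> 'n mat \<Rightarrow> real"
  assumes G: "closed_matrix_group G" and U: "closed_pair_group U"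
    and u: "lie_alg_pair U \<subseteq> lie_alg G \<times> lie_alg G" and a: "a \<in> G"
    and B: "bilinear B" and pos: "\<forall>X\<in>lie_alg G. X \<noteq> 0 \<longrightarrow> B X X > 0"
    and biinv: "\<forall>g\<in>G. \<forall>X\<in>lie_alg G. \<forall>Y\<in>lie_alg G. B (Ad g X) (Ad g Y) = B X Y"
    and P: "P \<in> lie_alg G" and Q: "Q \<in> lie_alg G"
  shows "(\<forall>Z\<in>lie_alg G \<times> lie_alg_pair U.
            B P (matrix_inv a ** fst (orbit_param_diff a Z)) + B Q (snd (orbit_param_diff a Z)) = 0)
      \<longleftrightarrow> P = - Ad (matrix_inv a) Q \<and> (\<forall>(V1, V2)\<in>lie_alg_pair U. B Q (Ad a V1 - V2) = 0)"
    (is "?orth \<longleftrightarrow> ?P_eq \<and> ?cond")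
proof -
  have a_inv: "invertible a" by (rule closed_matrix_group_invertible[OF G a])
  have g: "subspace (lie_alg G)" by (rule subspace_lie_alg[OF G])
  have zero: "0 \<in> lie_alg G" "(0, 0) \<in> lie_alg_pair U"
    using subspace_0[OF g] closed_pair_group_one[OF U] by (simp_all add: lie_alg_pair_def)
  note pairing = orbit_tangent_pairing[OF G a B biinv P]
  note bl = bilinear_lzero[OF B] bilinear_rzero[OF B] bilinear_ladd[OF B] bilinear_lsub[OF B]
    bilinear_rsub[OF B] bilinear_lneg[OF B]
  have "?orth \<longleftrightarrow> (\<forall>X\<in>lie_alg G. B (Ad a P + Q) X = 0) \<and> (\<forall>(V1, V2)\<in>lie_alg_pair U. B P V1 + B Q V2 = 0)"
  proof
    assume orth: ?orth
    have "B (Ad a P + Q) X = 0" if "X \<in> lie_alg G" for X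
      using orth[rule_format, of "(X, 0, 0)"] pairing[OF that, of 0 0] that zero by (simp add: bl)
    moreover have "B P V1 + B Q V2 = 0" if "(V1, V2) \<in> lie_alg_pair U" for V1 V2
      using orth[rule_format, of "(0, V1, V2)"] pairing[OF zero(1), of V1 V2] that zero by (simp add: bl)
    ultimately show "(\<forall>X\<in>lie_alg G. B (Ad a P + Q) X = 0) \<and> (\<forall>(V1, V2)\<in>lie_alg_pair U. B P V1 + B Q V2 = 0)"
      by blast
  qed (auto simp: pairing)
  moreover have "(\<forall>X\<in>lie_alg G. B (Ad a P + Q) X = 0) \<longleftrightarrow> ?P_eq"
  proof
    assume "\<forall>X\<in>lie_alg G. B (Ad a P + Q) X = 0"
    moreover have "Ad a P + Q \<in> lie_alg G"
      using Ad_in_lie_alg[OF G a P] Q g by (simp add: subspace_add)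
    ultimately have "Ad a P + Q = 0"
      using pos by force
    then show ?P_eq by (metis Ad_matrix_inv_Ad[OF a_inv] Ad_uminus add_eq_0_iff2)
  qed (simp add: Ad_uminus Ad_Ad_matrix_inv[OF a_inv] bl)
  moreover have "B P V1 + B Q V2 = - B Q (Ad a V1 - V2)" if ?P_eq "(V1, V2) \<in> lie_alg_pair U" for V1 V2
    using that u Q by (auto simp: bl bi_invariant_Ad_matrix_inv(2)[OF G a biinv])
  ultimately show ?thesis by fastforce
qed

lemma horizontal_base_point_iff:
  fixes B :: "'n::finite mat \<Rightarrow> 'n mat \<Rightarrow> real" and t :: real
  assumes G: "closed_matrix_group G" "compact G" and K: "K \<subseteq> G"
    and U: "closed_pair_group U" "U \<subseteq> K \<times> K" and a: "a \<in> G"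
  defines "\<phi> \<equiv> cheeger_phi B (lie_alg G) (lie_alg K) t"
  shows "v \<in> horizontal B G K t U (a, mat 1) \<longleftrightarrow>
    matrix_inv a ** fst v \<in> lie_alg G \<and> snd v \<in> lie_alg G \<and>
    (\<forall>Z\<in>lie_alg G \<times> lie_alg_pair U. B (\<phi> (matrix_inv a ** fst v)) (matrix_inv a ** fst (orbit_param_diff a Z))
       + B (\<phi> (snd v)) (snd (orbit_param_diff a Z)) = 0)"
proof -
  have "(G \<times> G) \<inter> U = U" using U(2) K by blast
  then have "compact U"
    using compact_Int_closed[OF compact_Times[OF G(2) G(2)], of U] U(1)
    by (simp add: closed_pair_group_def)
  note orbit = tangent_space_orbit[OF G U(1) this a]
  have tangent: "v \<in> tangent_space (G \<times> G) (a, mat 1) \<longleftrightarrow> matrix_inv a ** fst v \<in> lie_alg G \<and> snd v \<in> lie_alg G"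
    using tangent_space_closed_matrix_group[OF G(1) a] tangent_space_closed_matrix_group[OF G(1)
        closed_matrix_group_one[OF G(1)]]
    by (cases v) (simp add: tangent_space_Times)
  show ?thesis
    unfolding horizontal_def orbit \<phi>_def by (simp add: tangent metric1_prod_def metric1_def)
qed

lemma left_translate_image_iff:
  fixes a :: "'n::finite mat"
  assumes "invertible a"
  shows "(A, C) \<in> (\<lambda>v. (matrix_inv a ** fst v, snd v)) ` H \<longleftrightarrow> (a ** A, C) \<in> H"
proof
  assume "(A, C) \<in> (\<lambda>v. (matrix_inv a ** fst v, snd v)) ` H"
  then obtain v where "v \<in> H" "A = matrix_inv a ** fst v" "C = snd v" by auto
  then show "(a ** A, C) \<in> H"
    by (simp add: matrix_mul_assoc matrix_inv_right[OF assms])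
next
  assume "(a ** A, C) \<in> H"
  then show "(A, C) \<in> (\<lambda>v. (matrix_inv a ** fst v, snd v)) ` H"
    by (intro image_eqI[of _ _ "(a ** A, C)"]) (simp_all add: matrix_mul_assoc matrix_inv_left[OF assms])
qed

lemma translated_horizontal_eq:
  fixes B :: "'n::finite mat \<Rightarrow> 'n mat \<Rightarrow> real" and t :: real
  assumes G: "closed_matrix_group G" "compact G" and K: "closed_matrix_group K" "K \<subseteq> G"
    and U: "closed_pair_group U" "U \<subseteq> K \<times> K" and a: "a \<in> G"
    and B: "bilinear B" and pos: "\<forall>X\<in>lie_alg G. X \<noteq> 0 \<longrightarrow> B X X > 0"
    and biinv: "\<forall>g\<in>G. \<forall>X\<in>lie_alg G. \<forall>Y\<in>lie_alg G. B (Ad g X) (Ad g Y) = B X Y"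
  defines "\<phi> \<equiv> cheeger_phi B (lie_alg G) (lie_alg K) t"
  shows "(\<lambda>v. (matrix_inv a ** fst v, snd v)) ` horizontal B G K t U (a, mat 1) =
    {(A, C). A \<in> lie_alg G \<and> C \<in> lie_alg G \<and> \<phi> A = - Ad (matrix_inv a) (\<phi> C) \<and>
      (\<forall>(V1, V2)\<in>lie_alg_pair U. B (\<phi> C) (Ad a V1 - V2) = 0)}"
proof -
  interpret orthogonal_splitting B "lie_alg G" "lie_alg K"
    using subspace_lie_alg[OF G(1)] subspace_lie_alg[OF K(1)] lie_alg_mono[OF K(2)] B pos
    by unfold_locales
  have "lie_alg_pair U \<subseteq> lie_alg G \<times> lie_alg G"
    using lie_alg_pair_subset[OF U(2)] lie_alg_mono[OF K(2)] by blast
  note orth = orthogonal_to_orbit_iff[OF G(1) U(1) this a B pos biinv]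
  note horizontal = horizontal_base_point_iff[OF G K(2) U a, where B=B and t=t]
  have a_inv: "invertible a" by (rule closed_matrix_group_invertible[OF G(1) a])
  have a_cancel: "matrix_inv a ** (a ** A) = A" for A
    by (simp add: matrix_mul_assoc matrix_inv_left[OF a_inv])
  show ?thesis
  proof (intro set_eqI)
    fix z :: "'n mat \<times> 'n mat"
    obtain A C where z: "z = (A, C)" by (cases z)
    have "A \<in> lie_alg G \<Longrightarrow> C \<in> lie_alg G \<Longrightarrow>
      (\<forall>Z\<in>lie_alg G \<times> lie_alg_pair U. B (\<phi> A) (matrix_inv a ** fst (orbit_param_diff a Z))
         + B (\<phi> C) (snd (orbit_param_diff a Z)) = 0) \<longleftrightarrow>
      \<phi> A = - Ad (matrix_inv a) (\<phi> C) \<and> (\<forall>(V1, V2)\<in>lie_alg_pair U. B (\<phi> C) (Ad a V1 - V2) = 0)"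
      unfolding \<phi>_def by (intro orth cheeger_phi_in)
    then show "z \<in> (\<lambda>v. (matrix_inv a ** fst v, snd v)) ` horizontal B G K t U (a, mat 1) \<longleftrightarrow>
      z \<in> {(A, C). A \<in> lie_alg G \<and> C \<in> lie_alg G \<and> \<phi> A = - Ad (matrix_inv a) (\<phi> C) \<and>
        (\<forall>(V1, V2)\<in>lie_alg_pair U. B (\<phi> C) (Ad a V1 - V2) = 0)}"
      unfolding z left_translate_image_iff[OF a_inv] horizontal \<phi>_def[symmetric] fst_conv snd_conv a_cancel
      by blast
  qed
qed

lemma bij_betw_pairs_reparametrize:
  assumes f: "bij_betw f A A" and h: "\<And>z. z \<in> A \<Longrightarrow> h z \<in> A"
  shows "{(x, y). x \<in> A \<and> y \<in> A \<and> f x = h (f y) \<and> P (f y)} =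
    {(the_inv_into A f (h z), the_inv_into A f z) | z. z \<in> A \<and> P z}"
proof -
  have inv: "the_inv_into A f z \<in> A" "f (the_inv_into A f z) = z" if "z \<in> A" for z
    using bij_betwE[OF bij_betw_the_inv_into[OF f]] f_the_inv_into_f_bij_betw[OF f] that by auto
  have inv_f: "the_inv_into A f (f x) = x" if "x \<in> A" for x
    by (rule the_inv_into_f_f[OF bij_betw_imp_inj_on[OF f] that])
  have f_in: "f x \<in> A" if "x \<in> A" for x
    using bij_betwE[OF f] that by blast
  show ?thesis
  proof (intro set_eqI iffI)
    fix p assume "p \<in> {(x, y). x \<in> A \<and> y \<in> A \<and> f x = h (f y) \<and> P (f y)}"
    then obtain x y where "p = (x, y)" "x \<in> A" "y \<in> A" "f x = h (f y)" "P (f y)" by blast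
    then show "p \<in> {(the_inv_into A f (h z), the_inv_into A f z) | z. z \<in> A \<and> P z}"
      using inv_f f_in by (intro CollectI exI[of _ "f y"]) metis
  next
    fix p assume "p \<in> {(the_inv_into A f (h z), the_inv_into A f z) | z. z \<in> A \<and> P z}"
    then obtain z where "p = (the_inv_into A f (h z), the_inv_into A f z)" "z \<in> A" "P z" by blast
    then show "p \<in> {(x, y). x \<in> A \<and> y \<in> A \<and> f x = h (f y) \<and> P (f y)}"
      using inv h by simp
  qed
qed

theorem proposition2p2:
  fixes G K :: "'n::finite mat set"
    and U :: "('n mat \<times> 'n mat) set"
    and B :: "'n mat \<Rightarrow> 'n mat \<Rightarrow> real"
    and t :: real and g1 :: "'n mat"
  assumes G: "closed_matrix_group G" "compact G"
    and B_bilinear: "bilinear B"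
    and B_sym: "\<forall>X\<in>lie_alg G. \<forall>Y\<in>lie_alg G. B X Y = B Y X"
    and B_pos: "\<forall>X\<in>lie_alg G. X \<noteq> 0 \<longrightarrow> B X X > 0"
    and B_biinv: "\<forall>g\<in>G. \<forall>X\<in>lie_alg G. \<forall>Y\<in>lie_alg G. B (Ad g X) (Ad g Y) = B X Y"
    and K: "closed_matrix_group K" "K \<subseteq> G"
    and t: "t > 0"
    and U: "closed_pair_group U" "U \<subseteq> K \<times> K"
    and free: "\<forall>u\<in>U. \<forall>g\<in>G. fst u ** g ** matrix_inv (snd u) = g \<longrightarrow> u = (mat 1, mat 1)"
    and g1: "g1 \<in> G"
  shows "(\<lambda>v. (matrix_inv g1 ** fst v, snd v)) ` horizontal B G K t U (g1, mat 1) =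
    {(the_inv_into (lie_alg G) (cheeger_phi B (lie_alg G) (lie_alg K) t) (- Ad (matrix_inv g1) X),
      the_inv_into (lie_alg G) (cheeger_phi B (lie_alg G) (lie_alg K) t) X) | X.
      X \<in> lie_alg G \<and> (\<forall>(U1, U2) \<in> lie_alg_pair U. B X (Ad g1 U1 - U2) = 0)}"
proof -
  interpret orthogonal_splitting B "lie_alg G" "lie_alg K"
    using subspace_lie_alg[OF G(1)] subspace_lie_alg[OF K(1)] lie_alg_mono[OF K(2)] B_bilinear B_pos
    by unfold_locales
  have "- Ad (matrix_inv g1) X \<in> lie_alg G" if "X \<in> lie_alg G" for X
    using Ad_in_lie_alg[OF G(1) closed_matrix_group_inv[OF G(1) g1] that] subspace_lie_alg[OF G(1)]
    by (simp add: subspace_neg)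
  then show ?thesis
    unfolding translated_horizontal_eq[OF G K U g1 B_bilinear B_pos B_biinv]
    by (rule bij_betw_pairs_reparametrize[OF bij_betw_cheeger_phi[OF t]])
qed

end
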